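(* Let $r>0$, $\sigma>0$, $\mu\in\mathbb{R}$. For Lipschitz $h:\mathbb{R}\to\mathbb{R}$ let $f_h$ be the solution of the $\mathrm{SVG}(r,\sigma,\mu)$ Stein equation. There is no constant $M_{r,\sigma}>0$ such that $\|f_h^{(3)}\|\le M_{r,\sigma}\|h'\|$ for all Lipschitz $h:\mathbb{R}\to\mathbb{R}$.
   Context: $\mathrm{SVG}(r,\sigma,\mu)$ is the distribution with density $p(x)=\frac{1}{\sigma\sqrt{\pi}\Gamma(r/2)}\big(\frac{|x-\mu|}{2\sigma}\big)^{\frac{r-1}{2}}K_{\frac{r-1}{2}}\big(\frac{|x-\mu|}{\sigma}\big)$, with $I_\nu,K_\nu$ the modified Bessel functions of the first and second kind. For $Z\sim\mathrm{SVG}(r,\sigma,\mu)$, $\tilde h=h-\mathbb{E}h(Z)$; the Stein equation is $\sigma^2(x-\mu)f''(x)+\sigma^2rf'(x)-(x-\mu)f(x)=\tilde h(x)$, with solution (writing $y=x-\mu$, $\nu=\frac{r-1}2$) $$f_h(x)=-\frac{K_\nu(|y|/\sigma)}{\sigma^2|y|^\nu}\int_0^y|t|^\nu I_\nu(|t|/\sigma)\tilde h(t+\mu)\,dt-\frac{I_\nu(|y|/\sigma)}{\sigma^2|y|^\nu}\int_y^\infty|t|^\nu K_\nu(|t|/\sigma)\tilde h(t+\mu)\,dt.$$ $\|\cdot\|$ is the sup norm (taken over points where the derivative exists); $\|h'\|$ is the Lipschitz constant of $h$. *)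

theory Defs
  imports "HOL-Analysis.Analysis"
begin

definition besselI :: "real \<Rightarrow> real \<Rightarrow> real" where
  "besselI \<nu> x = (\<Sum>k. (x / 2) powr (2 * real k + \<nu>) / (fact k * Gamma (real k + \<nu> + 1)))"

definition besselK :: "real \<Rightarrow> real \<Rightarrow> real" where
  "besselK \<nu> x = (LBINT t=0..\<infinity>. exp (- x * cosh t) * cosh (\<nu> * t))"

definition svg_density :: "real \<Rightarrow> real \<Rightarrow> real \<Rightarrow> real \<Rightarrow> real" where
  "svg_density r \<sigma> \<mu> x =
     1 / (\<sigma> * sqrt pi * Gamma (r / 2)) * (\<bar>x - \<mu>\<bar> / (2 * \<sigma>)) powr ((r - 1) / 2)
       * besselK ((r - 1) / 2) (\<bar>x - \<mu>\<bar> / \<sigma>)"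

definition svg_expect :: "real \<Rightarrow> real \<Rightarrow> real \<Rightarrow> (real \<Rightarrow> real) \<Rightarrow> real" where
  "svg_expect r \<sigma> \<mu> h = (LINT x|lborel. h x * svg_density r \<sigma> \<mu> x)"

text \<open>The explicit formula for the solution, valid for y = x - mu \<noteq> 0.\<close>
definition svg_stein_formula :: "real \<Rightarrow> real \<Rightarrow> real \<Rightarrow> (real \<Rightarrow> real) \<Rightarrow> real \<Rightarrow> real" where
  "svg_stein_formula r \<sigma> \<mu> h x =
     (let \<nu> = (r - 1) / 2; y = x - \<mu>; ht = (\<lambda>u. h u - svg_expect r \<sigma> \<mu> h) in
       - besselK \<nu> (\<bar>y\<bar> / \<sigma>) / (\<sigma>\<^sup>2 * \<bar>y\<bar> powr \<nu>)
           * (LBINT t=0..ereal y. \<bar>t\<bar> powr \<nu> * besselI \<nu> (\<bar>t\<bar> / \<sigma>) * ht (t + \<mu>))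
       - besselI \<nu> (\<bar>y\<bar> / \<sigma>) / (\<sigma>\<^sup>2 * \<bar>y\<bar> powr \<nu>)
           * (LBINT t=ereal y..\<infinity>. \<bar>t\<bar> powr \<nu> * besselK \<nu> (\<bar>t\<bar> / \<sigma>) * ht (t + \<mu>)))"

definition svg_stein_sol :: "real \<Rightarrow> real \<Rightarrow> real \<Rightarrow> (real \<Rightarrow> real) \<Rightarrow> real \<Rightarrow> real" where
  "svg_stein_sol r \<sigma> \<mu> h x =
     (if x = \<mu> then Lim (at \<mu>) (svg_stein_formula r \<sigma> \<mu> h) else svg_stein_formula r \<sigma> \<mu> h x)"

definition third_deriv_at :: "(real \<Rightarrow> real) \<Rightarrow> real \<Rightarrow> real \<Rightarrow> bool" where
  "third_deriv_at f x D \<longleftrightarrow>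
     (\<exists>e>0. \<forall>y\<in>ball x e. f differentiable (at y) \<and> deriv f differentiable (at y))
     \<and> (deriv (deriv f) has_real_derivative D) (at x)"

text \<open>Lipschitz constant \<parallel>h'\<parallel>.\<close>
definition lip_const :: "(real \<Rightarrow> real) \<Rightarrow> real" where
  "lip_const h = Inf {L. L-lipschitz_on UNIV h}"

end

theory Submission
  imports Defs
begin

text \<open>
  Write \<open>y = x - \<mu>\<close> and \<open>\<nu> = (r - 1) / 2\<close>. For \<open>y > 0\<close> the solution is
  \<open>f = - u A - v B\<close> with \<open>u = K\<^sub>\<nu>(y/\<sigma>) / (\<sigma>\<^sup>2 y\<^sup>\<nu>)\<close>, \<open>v = I\<^sub>\<nu>(y/\<sigma>) / (\<sigma>\<^sup>2 y\<^sup>\<nu>)\<close>,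
  \<open>A' = w v H\<close>, \<open>B' = - w u H\<close>, where \<open>w = \<sigma>\<^sup>2 y\<^sup>2\<^sup>\<nu>\<close> and \<open>H = h - E h(Z)\<close>.
  The derivatives of \<open>A\<close> and \<open>B\<close> cancel in \<open>f'\<close>, and \<open>f'' = - u'' A - v'' B + w (v' u - u' v) H\<close>.
  For the tent function \<open>h x = max 0 (1 - \<bar>x - x\<^sub>0\<bar>)\<close> with \<open>x\<^sub>0 = \<mu> + \<sigma> \<zeta>\<close> the last term has a
  corner at \<open>x\<^sub>0\<close>, so by the mean value theorem a bound on \<open>f'''\<close> away from \<open>x\<^sub>0\<close> also bounds
  \<open>w (v' u - u' v)\<close> at \<open>x\<^sub>0\<close>. That quantity is at least
  \<open>\<zeta>\<^sup>\<nu> K\<^sub>\<nu>\<^sub>+\<^sub>1(\<zeta>) / (\<sigma>\<^sup>3 2\<^sup>\<nu> \<Gamma>(\<nu> + 1))\<close>, which is unbounded as \<open>\<zeta> \<rightarrow> 0\<close>, while the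
  Lipschitz constant of \<open>h\<close> is at most 1.
\<close>

section \<open>Kinks and third derivatives\<close>

text \<open>The one-sided difference quotients of \<open>f\<close> at \<open>x0\<close> tend to \<open>q' + g x0\<close> and \<open>q' - g x0\<close>.\<close>

lemma abs_kink_coefficient_le:
  fixes f q g :: "real \<Rightarrow> real"
  assumes q: "(q has_real_derivative q') (at x0)" and g: "isCont g x0"
    and f: "\<forall>\<^sub>F x in nhds x0. f x = q x - g x * \<bar>x - x0\<bar>"
    and f_lip: "\<forall>\<^sub>F x in at x0. \<bar>f x - f x0\<bar> \<le> N * \<bar>x - x0\<bar>"
  shows "\<bar>g x0\<bar> \<le> N"
proof -
  define d where "d x = (q x - q x0) / (x - x0)" for x
  have d: "(d \<longlongrightarrow> q') (at x0)"
    using q unfolding d_def has_field_derivative_iff .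
  have f_at: "\<forall>\<^sub>F x in at x0. f x = q x - g x * \<bar>x - x0\<bar>" and "f x0 = q x0"
    using f by (simp_all add: eventually_nhds_conv_at)
  have d_bound: "\<forall>\<^sub>F x in at x0. \<bar>d x - g x * sgn (x - x0)\<bar> \<le> N"
    using f_lip f_at eventually_neq_at_within[of x0 x0 UNIV]
  proof eventually_elim
    case (elim x)
    then have "d x - g x * sgn (x - x0) = (f x - f x0) / (x - x0)"
      using \<open>f x0 = q x0\<close> by (cases "x < x0") (auto simp: d_def field_simps)
    with elim show ?case
      by (simp add: abs_divide divide_le_eq)
  qed
  have g': "(g \<longlongrightarrow> g x0) (at x0)"
    using g by (simp add: isCont_def)
  have "\<bar>q' + g x0\<bar> \<le> N"
  proof (rule tendsto_upperbound)
    show "((\<lambda>x. \<bar>d x - g x * sgn (x - x0)\<bar>) \<longlongrightarrow> \<bar>q' + g x0\<bar>) (at_left x0)"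
    proof (rule Lim_transform_eventually)
      show "((\<lambda>x. \<bar>d x + g x\<bar>) \<longlongrightarrow> \<bar>q' + g x0\<bar>) (at_left x0)"
        using tendsto_mono[OF at_le d] tendsto_mono[OF at_le g'] by (intro tendsto_intros) auto
      show "\<forall>\<^sub>F x in at_left x0. \<bar>d x + g x\<bar> = \<bar>d x - g x * sgn (x - x0)\<bar>"
        by (rule eventually_mono[OF eventually_at_left_real[of "x0 - 1" x0]]) auto
    qed
    show "\<forall>\<^sub>F x in at_left x0. \<bar>d x - g x * sgn (x - x0)\<bar> \<le> N"
      using d_bound by (rule filter_leD[OF at_le, rotated]) simp
  qed simp
  moreover have "\<bar>q' - g x0\<bar> \<le> N"
  proof (rule tendsto_upperbound)
    show "((\<lambda>x. \<bar>d x - g x * sgn (x - x0)\<bar>) \<longlongrightarrow> \<bar>q' - g x0\<bar>) (at_right x0)"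
    proof (rule Lim_transform_eventually)
      show "((\<lambda>x. \<bar>d x - g x\<bar>) \<longlongrightarrow> \<bar>q' - g x0\<bar>) (at_right x0)"
        using tendsto_mono[OF at_le d] tendsto_mono[OF at_le g'] by (intro tendsto_intros) auto
      show "\<forall>\<^sub>F x in at_right x0. \<bar>d x - g x\<bar> = \<bar>d x - g x * sgn (x - x0)\<bar>"
        using eventually_at_right_less[of x0] by eventually_elim simp
    qed
    show "\<forall>\<^sub>F x in at_right x0. \<bar>d x - g x * sgn (x - x0)\<bar> \<le> N"
      using d_bound by (rule filter_leD[OF at_le, rotated]) simp
  qed simp
  ultimately show ?thesis
    by linarith
qed

lemma abs_diff_le_of_punctured_deriv_bound:
  fixes f f' :: "real \<Rightarrow> real"
  assumes cont: "continuous_on (ball x0 \<rho>) f"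
    and f': "\<And>x. x \<in> ball x0 \<rho> \<Longrightarrow> x \<noteq> x0 \<Longrightarrow> (f has_real_derivative f' x) (at x)"
    and bound: "\<And>x. x \<in> ball x0 \<rho> \<Longrightarrow> x \<noteq> x0 \<Longrightarrow> \<bar>f' x\<bar> \<le> N"
    and x: "x \<in> ball x0 \<rho>"
  shows "\<bar>f x - f x0\<bar> \<le> N * \<bar>x - x0\<bar>"
proof -
  have segment: "\<bar>f b - f a\<bar> \<le> N * (b - a)"
    if "a < b" "{a..b} \<subseteq> ball x0 \<rho>" "x0 \<notin> {a<..<b}" for a b
  proof -
    have "norm (f b - f a) \<le> N * b - N * a"
    proof (rule differentiable_bound_general[where \<phi>' = "\<lambda>_. N"])
      fix y assume "a < y" "y < b"
      with that have "y \<in> ball x0 \<rho>" "y \<noteq> x0"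
        by (auto dest!: subsetD[of _ _ y])
      then show "(f has_vector_derivative f' y) (at y)" "norm (f' y) \<le> N"
        using f' bound by (auto simp: has_real_derivative_iff_has_vector_derivative[symmetric])
      show "((\<lambda>x. N * x) has_vector_derivative N) (at y)"
        by (auto intro!: derivative_eq_intros simp: has_real_derivative_iff_has_vector_derivative[symmetric])
    qed (use that in \<open>auto intro: continuous_on_subset[OF cont] continuous_intros\<close>)
    then show ?thesis by (simp add: algebra_simps)
  qed
  have "{x..x0} \<subseteq> ball x0 \<rho>" "{x0..x} \<subseteq> ball x0 \<rho>"
    using x by (auto simp: dist_real_def)
  then show ?thesis
    using segment[of x x0] segment[of x0 x] by (cases x x0 rule: linorder_cases) auto
qed

definition thrice_differentiable_on :: "(real \<Rightarrow> real) \<Rightarrow> real set \<Rightarrow> bool" where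
  "thrice_differentiable_on f S \<longleftrightarrow>
     (\<forall>x\<in>S. f differentiable (at x) \<and> deriv f differentiable (at x) \<and> deriv (deriv f) differentiable (at x))"

lemma thrice_differentiable_onI:
  assumes "open S"
    and f: "\<And>x. x \<in> S \<Longrightarrow> (f has_real_derivative f1 x) (at x)"
    and f1: "\<And>x. x \<in> S \<Longrightarrow> (f1 has_real_derivative f2 x) (at x)"
    and f2: "\<And>x. x \<in> S \<Longrightarrow> f2 differentiable (at x)"
  shows "thrice_differentiable_on f S"
  unfolding thrice_differentiable_on_def
proof
  fix x assume x: "x \<in> S"
  have "deriv f y = f1 y" if "y \<in> S" for y
    using f[OF that] by (rule DERIV_imp_deriv)
  then have d1: "(deriv f has_real_derivative f2 y) (at y)" if "y \<in> S" for y
    using has_field_derivative_transform_within_open[OF f1 \<open>open S\<close>] that by metis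
  have "deriv (deriv f) y = f2 y" if "y \<in> S" for y
    using d1[OF that] by (rule DERIV_imp_deriv)
  moreover obtain D where "(f2 has_real_derivative D) (at x)"
    using f2[OF x] real_differentiable_def by blast
  ultimately have "deriv (deriv f) differentiable (at x)"
    using has_field_derivative_transform_within_open[OF _ \<open>open S\<close> x] real_differentiable_def
    by metis
  with f[OF x] d1[OF x] show "f differentiable (at x) \<and> deriv f differentiable (at x) \<and> deriv (deriv f) differentiable (at x)"
    by (auto simp: real_differentiable_def)
qed

lemma thrice_differentiable_onD:
  assumes "thrice_differentiable_on f S" "x \<in> S"
  shows "(f has_real_derivative deriv f x) (at x)"
    and "(deriv f has_real_derivative deriv (deriv f) x) (at x)"
    and "deriv (deriv f) differentiable (at x)"
  using assms by (auto simp: thrice_differentiable_on_def DERIV_deriv_iff_real_differentiable)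

lemma third_deriv_atI:
  assumes "open S" "x \<in> S"
    and f: "\<And>y. y \<in> S \<Longrightarrow> (f has_real_derivative f1 y) (at y)"
    and f1: "\<And>y. y \<in> S \<Longrightarrow> (f1 has_real_derivative f2 y) (at y)"
    and f2: "(f2 has_real_derivative D) (at x)"
  shows "third_deriv_at f x D"
proof -
  obtain e where e: "e > 0" "ball x e \<subseteq> S"
    using \<open>open S\<close> \<open>x \<in> S\<close> open_contains_ball by blast
  have "deriv f y = f1 y" if "y \<in> S" for y
    using f[OF that] by (rule DERIV_imp_deriv)
  then have d1: "(deriv f has_real_derivative f2 y) (at y)" if "y \<in> S" for y
    using has_field_derivative_transform_within_open[OF f1 \<open>open S\<close>] that by metis
  have "deriv (deriv f) y = f2 y" if "y \<in> S" for y
    using d1[OF that] by (rule DERIV_imp_deriv)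
  then have "(deriv (deriv f) has_real_derivative D) (at x)"
    using has_field_derivative_transform_within_open[OF f2 \<open>open S\<close> \<open>x \<in> S\<close>] by metis
  with e f d1 show ?thesis
    unfolding third_deriv_at_def real_differentiable_def by blast
qed

lemma thrice_differentiable_on_const: "thrice_differentiable_on (\<lambda>_. c) S"
  by (simp add: thrice_differentiable_on_def)

lemma thrice_differentiable_on_mult:
  assumes "open S" "thrice_differentiable_on f S" "thrice_differentiable_on g S"
  shows "thrice_differentiable_on (\<lambda>x. f x * g x) S"
proof (rule thrice_differentiable_onI[OF \<open>open S\<close>])
  note f = thrice_differentiable_onD[OF assms(2)] and g = thrice_differentiable_onD[OF assms(3)]
  fix x assume x: "x \<in> S"
  show "((\<lambda>x. f x * g x) has_real_derivative deriv f x * g x + f x * deriv g x) (at x)"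
    using f(1)[OF x] g(1)[OF x] by (auto intro!: derivative_eq_intros)
  show "((\<lambda>x. deriv f x * g x + f x * deriv g x) has_real_derivative
      deriv (deriv f) x * g x + 2 * deriv f x * deriv g x + f x * deriv (deriv g) x) (at x)"
    using f(1,2)[OF x] g(1,2)[OF x] by (auto intro!: derivative_eq_intros)
  show "(\<lambda>x. deriv (deriv f) x * g x + 2 * deriv f x * deriv g x + f x * deriv (deriv g) x) differentiable (at x)"
    using assms(2,3) x unfolding thrice_differentiable_on_def by (auto intro!: derivative_intros)
qed

lemma thrice_differentiable_on_subset:
  "thrice_differentiable_on f S \<Longrightarrow> T \<subseteq> S \<Longrightarrow> thrice_differentiable_on f T"
  by (auto simp: thrice_differentiable_on_def)

lemma variation_of_parameters_derivs:
  fixes F u v w A B H :: "real \<Rightarrow> real"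
  assumes "open S"
    and F: "\<And>x. x \<in> S \<Longrightarrow> F x = - u x * A x - v x * B x"
    and u: "thrice_differentiable_on u S" and v: "thrice_differentiable_on v S"
    and A: "\<And>x. x \<in> S \<Longrightarrow> (A has_real_derivative w x * v x * H x) (at x)"
    and B: "\<And>x. x \<in> S \<Longrightarrow> (B has_real_derivative - w x * u x * H x) (at x)"
    and x: "x \<in> S"
  shows "(F has_real_derivative - deriv u x * A x - deriv v x * B x) (at x)"
    and "((\<lambda>x. - deriv u x * A x - deriv v x * B x) has_real_derivative
      - deriv (deriv u) x * A x - deriv (deriv v) x * B x + w x * (deriv v x * u x - deriv u x * v x) * H x) (at x)"
proof -
  note u' = thrice_differentiable_onD[OF u x] and v' = thrice_differentiable_onD[OF v x]
  have "((\<lambda>x. - u x * A x - v x * B x) has_real_derivative - deriv u x * A x - deriv v x * B x) (at x)"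
    using u'(1) v'(1) A[OF x] B[OF x] by (auto intro!: derivative_eq_intros simp: algebra_simps)
  then show "(F has_real_derivative - deriv u x * A x - deriv v x * B x) (at x)"
    by (rule has_field_derivative_transform_within_open[OF _ \<open>open S\<close> x]) (use F in auto)
  show "((\<lambda>x. - deriv u x * A x - deriv v x * B x) has_real_derivative
      - deriv (deriv u) x * A x - deriv (deriv v) x * B x + w x * (deriv v x * u x - deriv u x * v x) * H x) (at x)"
    using u'(1,2) v'(1,2) A[OF x] B[OF x] by (auto intro!: derivative_eq_intros simp: algebra_simps)
qed

lemma abs_kink_coefficient_le_of_deriv_bound:
  fixes q g :: "real \<Rightarrow> real"
  assumes "\<rho> > 0"
    and q: "\<And>x. x \<in> ball x0 \<rho> \<Longrightarrow> q differentiable (at x)"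
    and g: "\<And>x. x \<in> ball x0 \<rho> \<Longrightarrow> g differentiable (at x)"
    and bound: "\<And>x D. x \<in> ball x0 \<rho> \<Longrightarrow> x \<noteq> x0 \<Longrightarrow>
      ((\<lambda>x. q x - g x * \<bar>x - x0\<bar>) has_real_derivative D) (at x) \<Longrightarrow> \<bar>D\<bar> \<le> N"
  shows "\<bar>g x0\<bar> \<le> N"
proof -
  let ?S = "ball x0 \<rho>" and ?f = "\<lambda>x. q x - g x * \<bar>x - x0\<bar>"
  have x0: "x0 \<in> ?S"
    using \<open>\<rho> > 0\<close> by simp
  have f_deriv: "(?f has_real_derivative deriv ?f x) (at x)" if "x \<in> ?S" "x \<noteq> x0" for x
  proof -
    have "(\<lambda>x. \<bar>x - x0\<bar>) differentiable (at x)"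
      using differentiable_chain_at[of "\<lambda>x. x - x0" x norm] \<open>x \<noteq> x0\<close> by (simp add: o_def)
    with q[OF that(1)] g[OF that(1)] show ?thesis
      unfolding DERIV_deriv_iff_real_differentiable by (intro derivative_intros)
  qed
  have "continuous_on ?S ?f"
    using q g by (intro continuous_at_imp_continuous_on ballI continuous_intros differentiable_imp_continuous_within)
  then have "\<bar>?f x - ?f x0\<bar> \<le> N * \<bar>x - x0\<bar>" if "x \<in> ?S" for x
    using abs_diff_le_of_punctured_deriv_bound[OF _ f_deriv _ that] bound f_deriv by blast
  moreover have "\<forall>\<^sub>F x in at x0. x \<in> ?S"
    using eventually_at_ball[OF \<open>\<rho> > 0\<close>, of x0 UNIV] by simp
  ultimately have "\<forall>\<^sub>F x in at x0. \<bar>?f x - ?f x0\<bar> \<le> N * \<bar>x - x0\<bar>"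
    by (auto elim: eventually_mono)
  moreover have "(q has_real_derivative deriv q x0) (at x0)"
    using q[OF x0] DERIV_deriv_iff_real_differentiable by blast
  moreover have "isCont g x0"
    using g[OF x0] by (rule differentiable_imp_continuous_within)
  ultimately show ?thesis
    by (intro abs_kink_coefficient_le[where f = ?f]) auto
qed

text \<open>On the ball, \<open>F'' = q - g \<bar>x - x0\<bar>\<close> with \<open>g = w (v' u - u' v)\<close> and \<open>q\<close> differentiable.\<close>

lemma variation_of_parameters_kink_bound:
  fixes F u v w A B H :: "real \<Rightarrow> real"
  assumes "\<rho> > 0"
    and F: "\<And>x. x \<in> ball x0 \<rho> \<Longrightarrow> F x = - u x * A x - v x * B x"
    and u: "thrice_differentiable_on u (ball x0 \<rho>)"
    and v: "thrice_differentiable_on v (ball x0 \<rho>)"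
    and w: "\<And>x. x \<in> ball x0 \<rho> \<Longrightarrow> w differentiable (at x)"
    and A: "\<And>x. x \<in> ball x0 \<rho> \<Longrightarrow> (A has_real_derivative w x * v x * H x) (at x)"
    and B: "\<And>x. x \<in> ball x0 \<rho> \<Longrightarrow> (B has_real_derivative - w x * u x * H x) (at x)"
    and H: "\<And>x. x \<in> ball x0 \<rho> \<Longrightarrow> H x = c - \<bar>x - x0\<bar>"
    and bound: "\<And>x D. third_deriv_at F x D \<Longrightarrow> \<bar>D\<bar> \<le> N"
  shows "\<bar>w x0 * (deriv v x0 * u x0 - deriv u x0 * v x0)\<bar> \<le> N"
proof -
  let ?S = "ball x0 \<rho>"
  note derivs = variation_of_parameters_derivs[OF open_ball F u v A B]
  define g where "g x = w x * (deriv v x * u x - deriv u x * v x)" for x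
  define q where "q x = - deriv (deriv u) x * A x - deriv (deriv v) x * B x + g x * c" for x
  have g_diff: "g differentiable (at x)" if "x \<in> ?S" for x
    using u v w[OF that] that unfolding g_def[abs_def] thrice_differentiable_on_def
    by (auto intro!: derivative_intros)
  have "\<bar>g x0\<bar> \<le> N"
  proof (rule abs_kink_coefficient_le_of_deriv_bound[OF \<open>\<rho> > 0\<close> _ g_diff])
    fix x assume x: "x \<in> ?S"
    have "A differentiable (at x)" "B differentiable (at x)"
      using A[OF x] B[OF x] real_differentiable_def by blast+
    then show "q differentiable (at x)"
      using thrice_differentiable_onD(3)[OF u x] thrice_differentiable_onD(3)[OF v x] g_diff[OF x]
      unfolding q_def[abs_def] by (auto intro!: derivative_intros)
    fix D assume "((\<lambda>x. q x - g x * \<bar>x - x0\<bar>) has_real_derivative D) (at x)"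
    then have "((\<lambda>x. - deriv (deriv u) x * A x - deriv (deriv v) x * B x
        + w x * (deriv v x * u x - deriv u x * v x) * H x) has_real_derivative D) (at x)"
      by (rule has_field_derivative_transform_within_open[OF _ open_ball x])
        (simp add: q_def g_def H algebra_simps)
    then show "\<bar>D\<bar> \<le> N"
      using bound third_deriv_atI[OF open_ball x derivs(1) derivs(2)] by blast
  qed
  then show ?thesis
    by (simp add: g_def)
qed

section \<open>Integrals over half-lines\<close>

lemma set_borel_measurable_continuous_on:
  fixes f :: "real \<Rightarrow> real"
  assumes "continuous_on A f" "A \<in> sets borel"
  shows "set_borel_measurable lborel A f"
  using set_measurable_continuous_on[OF assms(2,1)] unfolding set_borel_measurable_def by simp

lemma set_integrable_lborel_of_integrable_on:
  fixes f :: "real \<Rightarrow> real"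
  assumes "f integrable_on A" "\<And>x. x \<in> A \<Longrightarrow> 0 \<le> f x"
    and "continuous_on A f" "A \<in> sets borel"
  shows "set_integrable lborel A f"
proof -
  have "integrable lebesgue (\<lambda>x. indicator A x *\<^sub>R f x)"
    using nonnegative_absolutely_integrable_1[OF assms(1,2)] unfolding set_integrable_def .
  moreover have "(\<lambda>x. indicator A x *\<^sub>R f x) \<in> borel_measurable lborel"
    using set_borel_measurable_continuous_on[OF assms(3,4)] unfolding set_borel_measurable_def .
  ultimately show ?thesis
    unfolding set_integrable_def by (simp add: integrable_completion)
qed

lemma set_integrable_exp_neg_Ioi:
  fixes a c :: real
  assumes "a > 0"
  shows "set_integrable lborel {c<..} (\<lambda>t. exp (- a * t))"
proof -
  have "set_integrable lborel {c..} (\<lambda>t. exp (- a * t))"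
    using integrable_on_exp_minus_to_infinity[OF assms]
    by (intro set_integrable_lborel_of_integrable_on continuous_intros) auto
  then show ?thesis
    by (rule set_integrable_subset) auto
qed

lemma set_integrable_powr_Ioc_0:
  fixes a c :: real
  assumes "a > -1" "c \<ge> 0"
  shows "set_integrable lborel {0<..c} (\<lambda>x. x powr a)"
  using integrable_on_powr_from_0'[OF assms]
  by (intro set_integrable_lborel_of_integrable_on continuous_intros) auto

lemma has_real_derivative_interval_integral_upper:
  fixes f :: "real \<Rightarrow> real"
  assumes cont: "continuous_on {a<..} f"
    and int: "\<And>Y. Y > a \<Longrightarrow> interval_lebesgue_integrable lborel (ereal a) (ereal Y) f"
    and y: "y > a"
  shows "((\<lambda>Y. LBINT t=ereal a..ereal Y. f t) has_real_derivative f y) (at y)"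
proof -
  define a' where "a' = (a + y) / 2"
  have a': "a < a'" "a' < y"
    using y unfolding a'_def by auto
  have integral_split: "(LBINT t=ereal a..ereal a'. f t) + (LBINT t=ereal a'..ereal Y. f t)
      = (LBINT t=ereal a..ereal Y. f t)" if "Y \<in> {a'<..}" for Y
  proof (rule interval_integral_sum)
    have "min (ereal a) (min (ereal a') (ereal Y)) = ereal a"
      "max (ereal a) (max (ereal a') (ereal Y)) = ereal Y"
      using that a' by (auto simp: min_def max_def)
    then show "interval_lebesgue_integrable lborel (min (ereal a) (min (ereal a') (ereal Y)))
        (max (ereal a) (max (ereal a') (ereal Y))) f"
      using int[of Y] that a' by simp
  qed
  have "((\<lambda>u. LBINT t=a'..u. f t) has_vector_derivative f y) (at y within {a'..y+1})"
    by (rule interval_integral_FTC2) (use a' in \<open>auto intro: continuous_on_subset[OF cont]\<close>)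
  then have "((\<lambda>u. LBINT t=a'..u. f t) has_vector_derivative f y) (at y)"
    using at_within_Icc_at[of a' y "y+1"] a' by simp
  then have "((\<lambda>u. LBINT t=a'..u. f t) has_real_derivative f y) (at y)"
    by (simp add: has_real_derivative_iff_has_vector_derivative)
  then have "((\<lambda>Y. (LBINT t=ereal a..ereal a'. f t) + (LBINT t=ereal a'..ereal Y. f t))
      has_real_derivative f y) (at y)"
    by (auto intro!: derivative_eq_intros)
  then show ?thesis
    by (rule has_field_derivative_transform_within_open[where S="{a'<..}"]) (use a' integral_split in auto)
qed

lemma has_real_derivative_interval_integral_lower_to_infinity:
  fixes f :: "real \<Rightarrow> real"
  assumes cont: "continuous_on {a<..} f"
    and int: "set_integrable lborel {a<..} f"
    and y: "y > a"
  shows "((\<lambda>Y. LBINT t=ereal Y..\<infinity>. f t) has_real_derivative - f y) (at y)"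
proof -
  have int_Y: "interval_lebesgue_integrable lborel (ereal a) (ereal Y) f" if "Y > a" for Y
    unfolding interval_lebesgue_integrable_def using that
    by (auto intro!: set_integrable_subset[OF int] simp: einterval_iff)
  have integral_split: "(LBINT t=ereal a..\<infinity>. f t) - (LBINT t=ereal a..ereal Y. f t) = (LBINT t=ereal Y..\<infinity>. f t)"
    if "Y \<in> {a<..}" for Y
  proof -
    have "(LBINT t=ereal a..ereal Y. f t) + (LBINT t=ereal Y..\<infinity>. f t) = (LBINT t=ereal a..\<infinity>. f t)"
    proof (rule interval_integral_sum)
      have "min (ereal a) (min (ereal Y) \<infinity>) = ereal a" "max (ereal a) (max (ereal Y) \<infinity>) = \<infinity>"
        using that by (auto simp: min_def max_def)
      then show "interval_lebesgue_integrable lborel (min (ereal a) (min (ereal Y) \<infinity>))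
          (max (ereal a) (max (ereal Y) \<infinity>)) f"
        using int by (simp add: interval_integrable_to_infinity_eq)
    qed
    then show ?thesis by simp
  qed
  have "((\<lambda>Y. (LBINT t=ereal a..\<infinity>. f t) - (LBINT t=ereal a..ereal Y. f t))
      has_real_derivative 0 - f y) (at y)"
    by (intro derivative_intros has_real_derivative_interval_integral_upper[OF cont int_Y y]) auto
  then have "((\<lambda>Y. (LBINT t=ereal a..\<infinity>. f t) - (LBINT t=ereal a..ereal Y. f t))
      has_real_derivative - f y) (at y)"
    by simp
  then show ?thesis
    by (rule has_field_derivative_transform_within_open[where S="{a<..}"]) (use y integral_split in auto)
qed

section \<open>The Bessel function \<open>K\<close> and its derivatives\<close>

lemma cosh_le_exp_abs: "cosh (a :: real) \<le> exp \<bar>a\<bar>"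
  by (simp add: cosh_def abs_if)

lemma one_plus_square_div_4_le_cosh:
  fixes t :: real
  assumes "t \<ge> 0"
  shows "1 + t\<^sup>2 / 4 \<le> cosh t"
proof -
  have "1 + t + t\<^sup>2 / 2 \<le> exp t"
    using exp_lower_Taylor_quadratic assms by blast
  moreover have "1 + (- t) \<le> exp (- t)"
    by (rule exp_ge_add_one_self)
  ultimately show ?thesis
    by (simp add: cosh_def)
qed

text \<open>\<open>K_moment n \<nu> x\<close> is \<open>(-1)\<^sup>n\<close> times the \<open>n\<close>-th derivative of \<open>K\<^sub>\<nu>\<close> at \<open>x > 0\<close>.\<close>
definition K_moment :: "nat \<Rightarrow> real \<Rightarrow> real \<Rightarrow> real" where
  "K_moment n \<nu> x = (LINT t:{0<..}|lborel. cosh t ^ n * exp (- x * cosh t) * cosh (\<nu> * t))"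

lemma besselK_eq_K_moment: "besselK \<nu> x = K_moment 0 \<nu> x"
  unfolding besselK_def K_moment_def zero_ereal_def interval_integral_to_infinity_eq by simp

lemma K_moment_integrand_le:
  fixes t x \<nu> :: real
  assumes t: "t \<ge> 0" and x: "x > 0"
  shows "\<bar>cosh t ^ n * exp (- x * cosh t) * cosh (\<nu> * t)\<bar> \<le> exp ((real n + \<bar>\<nu>\<bar> + 1)\<^sup>2 / x) * exp (- t)"
proof -
  define B where "B = real n + \<bar>\<nu>\<bar> + 1"
  have cosh_pos: "0 < cosh s" for s :: real
    by (rule cosh_real_pos)
  have "cosh t ^ n \<le> exp (real n * t)"
    using power_mono[OF cosh_le_exp_abs[of t], of n] t by (simp add: exp_of_nat_mult less_imp_le[OF cosh_pos])
  moreover have "cosh (\<nu> * t) \<le> exp (\<bar>\<nu>\<bar> * t)"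
    using cosh_le_exp_abs[of "\<nu> * t"] t by (simp add: abs_mult)
  moreover have "exp (- x * cosh t) \<le> exp (- x * (t\<^sup>2 / 4))"
    using one_plus_square_div_4_le_cosh[OF t] x by (simp add: mult_le_cancel_left_pos)
  ultimately have "\<bar>cosh t ^ n * exp (- x * cosh t) * cosh (\<nu> * t)\<bar>
      \<le> exp (real n * t) * exp (- x * (t\<^sup>2 / 4)) * exp (\<bar>\<nu>\<bar> * t)"
    by (simp add: abs_mult abs_of_pos cosh_pos mult_mono)
  also have "\<dots> = exp (B\<^sup>2 / x - t - (x * t / 2 - B)\<^sup>2 / x)"
    using x by (simp add: B_def exp_add[symmetric] power2_eq_square field_simps)
  also have "\<dots> \<le> exp (B\<^sup>2 / x - t)"
    using x by simp
  finally show ?thesis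
    by (simp add: B_def exp_diff exp_minus field_simps)
qed

lemma K_moment_integrable:
  fixes x \<nu> :: real
  assumes "x > 0"
  shows "set_integrable lborel {0<..} (\<lambda>t. cosh t ^ n * exp (- x * cosh t) * cosh (\<nu> * t))"
proof (rule set_integrable_bound[OF set_integrable_mult_right[OF set_integrable_exp_neg_Ioi[of 1 0]]])
  show "set_borel_measurable lborel {0<..} (\<lambda>t. cosh t ^ n * exp (- x * cosh t) * cosh (\<nu> * t))"
    by (intro set_borel_measurable_continuous_on continuous_intros) auto
  show "AE t in lborel. t \<in> {0<..} \<longrightarrow> norm (cosh t ^ n * exp (- x * cosh t) * cosh (\<nu> * t))
      \<le> norm (exp ((real n + \<bar>\<nu>\<bar> + 1)\<^sup>2 / x) * exp (- 1 * t))"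
    using K_moment_integrand_le[OF _ assms] by auto
qed auto

lemma K_moment_nonneg: "x > 0 \<Longrightarrow> 0 \<le> K_moment n \<nu> x"
  unfolding K_moment_def set_lebesgue_integral_def
  by (rule Bochner_Integration.integral_nonneg) (auto simp: cosh_real_pos less_imp_le indicator_def)

lemma abs_exp_minus_one_minus_le: "\<bar>exp s - 1 - s\<bar> \<le> s\<^sup>2 * exp \<bar>s\<bar> / 2" for s :: real
proof -
  obtain t where t: "\<bar>t\<bar> \<le> \<bar>s\<bar>" "exp s = (\<Sum>m<2. s ^ m / fact m) + exp t / fact 2 * s ^ 2"
    using Maclaurin_exp_le[of s 2] by blast
  then have taylor: "exp s - 1 - s = exp t / 2 * s\<^sup>2"
    by (simp add: numeral_2_eq_2)
  have "exp t \<le> exp \<bar>s\<bar>"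
    using t(1) by simp
  then show ?thesis
    unfolding taylor by (simp add: mult_right_mono mult.commute)
qed

lemma exp_neg_mult_diff_quotient_le:
  fixes x h c :: real
  assumes "c > 0" "h \<noteq> 0" "\<bar>h\<bar> \<le> x / 2"
  shows "\<bar>(exp (- (x + h) * c) - exp (- x * c)) / h + c * exp (- x * c)\<bar>
    \<le> \<bar>h\<bar> * (c\<^sup>2 * exp (- (x / 2) * c))"
proof -
  have "(exp (- (x + h) * c) - exp (- x * c)) / h + c * exp (- x * c)
      = exp (- x * c) * (exp (- h * c) - 1 - (- h * c)) / h"
    using assms by (simp add: field_simps exp_add[symmetric] distrib_right)
  then have "\<bar>(exp (- (x + h) * c) - exp (- x * c)) / h + c * exp (- x * c)\<bar>
      = exp (- x * c) * \<bar>exp (- h * c) - 1 - (- h * c)\<bar> / \<bar>h\<bar>"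
    by (simp add: abs_mult)
  also have "\<dots> \<le> exp (- x * c) * ((h * c)\<^sup>2 * exp (\<bar>h\<bar> * c) / 2) / \<bar>h\<bar>"
    using abs_exp_minus_one_minus_le[of "- h * c"] assms(1)
    by (intro divide_right_mono mult_left_mono) (auto simp: abs_mult power_mult_distrib)
  also have "\<dots> = (h * c)\<^sup>2 / \<bar>h\<bar> * (exp (- x * c) * exp (\<bar>h\<bar> * c)) / 2"
    using assms(2) by (simp add: field_simps)
  also have "(h * c)\<^sup>2 / \<bar>h\<bar> = \<bar>h\<bar> * c\<^sup>2"
    using assms(2) by (simp add: power2_eq_square field_simps)
  also have "\<bar>h\<bar> * c\<^sup>2 * (exp (- x * c) * exp (\<bar>h\<bar> * c)) / 2 \<le> \<bar>h\<bar> * (c\<^sup>2 * exp (- (x / 2) * c))"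
  proof -
    have "- x * c + \<bar>h\<bar> * c \<le> - (x / 2) * c"
      using assms(1,3) by (simp add: mult_right_mono algebra_simps)
    then have "exp (- x * c) * exp (\<bar>h\<bar> * c) \<le> exp (- (x / 2) * c)"
      by (simp add: exp_add[symmetric])
    then have "\<bar>h\<bar> * c\<^sup>2 * (exp (- x * c) * exp (\<bar>h\<bar> * c)) \<le> \<bar>h\<bar> * (c\<^sup>2 * exp (- (x / 2) * c))"
      by (simp add: mult_left_mono mult.assoc)
    moreover have "0 \<le> \<bar>h\<bar> * (c\<^sup>2 * exp (- (x / 2) * c))"
      by simp
    ultimately show ?thesis
      by linarith
  qed
  finally show ?thesis .
qed

lemma K_moment_diff_quotient_le:
  fixes x h \<nu> :: real
  assumes x: "x > 0" and h: "h \<noteq> 0" "\<bar>h\<bar> \<le> x / 2"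
  shows "\<bar>(K_moment n \<nu> (x + h) - K_moment n \<nu> x) / h + K_moment (Suc n) \<nu> x\<bar>
    \<le> \<bar>h\<bar> * K_moment (Suc (Suc n)) \<nu> (x / 2)"
proof -
  define k where "k m y t = cosh t ^ m * exp (- y * cosh t) * cosh (\<nu> * t)" for m y t
  define g where "g t = (k n (x + h) t - k n x t) / h + k (Suc n) x t" for t
  have int: "set_integrable lborel {0<..} (k m y)" if "y > 0" for m y
    unfolding k_def using K_moment_integrable[OF that] .
  have int_g: "set_integrable lborel {0<..} g"
    unfolding g_def using int x h by (intro set_integral_add set_integrable_divide set_integral_diff) auto
  have "(K_moment n \<nu> (x + h) - K_moment n \<nu> x) / h + K_moment (Suc n) \<nu> x = (LINT t:{0<..}|lborel. g t)"
    unfolding g_def K_moment_def k_def[symmetric] using int x h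
    by (simp add: set_integral_add set_integral_diff set_integrable_divide)
  also have "\<bar>\<dots>\<bar> \<le> (LINT t:{0<..}|lborel. \<bar>g t\<bar>)"
    using set_integral_norm_bound[OF int_g] by simp
  also have "\<dots> \<le> (LINT t:{0<..}|lborel. \<bar>h\<bar> * k (Suc (Suc n)) (x / 2) t)"
  proof (rule set_integral_mono)
    show "set_integrable lborel {0<..} (\<lambda>t. \<bar>g t\<bar>)"
      using int_g by (rule set_integrable_abs)
    show "set_integrable lborel {0<..} (\<lambda>t. \<bar>h\<bar> * k (Suc (Suc n)) (x / 2) t)"
      using int x by (intro set_integrable_mult_right) auto
    fix t :: real
    have "g t = cosh t ^ n * cosh (\<nu> * t)
        * ((exp (- (x + h) * cosh t) - exp (- x * cosh t)) / h + cosh t * exp (- x * cosh t))"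
      unfolding g_def k_def by (simp add: field_simps)
    also have "\<bar>\<dots>\<bar> \<le> cosh t ^ n * cosh (\<nu> * t) * (\<bar>h\<bar> * ((cosh t)\<^sup>2 * exp (- (x / 2) * cosh t)))"
      using exp_neg_mult_diff_quotient_le[OF cosh_real_pos h] 
      by (simp add: abs_mult cosh_real_pos less_imp_le mult_left_mono)
    also have "\<dots> = \<bar>h\<bar> * k (Suc (Suc n)) (x / 2) t"
      unfolding k_def by (simp add: power2_eq_square mult_ac)
    finally show "\<bar>g t\<bar> \<le> \<bar>h\<bar> * k (Suc (Suc n)) (x / 2) t" .
  qed
  also have "\<dots> = \<bar>h\<bar> * K_moment (Suc (Suc n)) \<nu> (x / 2)"
    unfolding K_moment_def k_def by simp
  finally show ?thesis .
qed

lemma has_real_derivative_K_moment: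
  fixes x \<nu> :: real
  assumes x: "x > 0"
  shows "(K_moment n \<nu> has_real_derivative - K_moment (Suc n) \<nu> x) (at x)"
  unfolding has_field_derivative_iff
proof (subst LIM_zero_iff[symmetric], rule Lim_null_comparison)
  show "((\<lambda>y. \<bar>y - x\<bar> * K_moment (Suc (Suc n)) \<nu> (x / 2)) \<longlongrightarrow> 0) (at x)"
    by (rule tendsto_eq_intros refl | simp)+
  have "\<forall>\<^sub>F y in at x. 0 < dist y x \<and> dist y x < x / 2"
    using x by (auto simp: eventually_at intro!: exI[of _ "x/2"])
  then show "\<forall>\<^sub>F y in at x. norm ((K_moment n \<nu> y - K_moment n \<nu> x) / (y - x) - - K_moment (Suc n) \<nu> x)
       \<le> \<bar>y - x\<bar> * K_moment (Suc (Suc n)) \<nu> (x / 2)"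
  proof eventually_elim
    case (elim y)
    then have "y - x \<noteq> 0" "\<bar>y - x\<bar> \<le> x / 2"
      by (auto simp: dist_real_def)
    from K_moment_diff_quotient_le[OF x this] show ?case
      by simp
  qed
qed

lemma continuous_on_K_moment: "continuous_on {0<..} (K_moment n \<nu>)"
  using has_real_derivative_K_moment DERIV_isCont by (blast intro: continuous_at_imp_continuous_on)

lemma abs_sinh_le_cosh: "\<bar>sinh a\<bar> \<le> cosh (a :: real)"
  using sinh_le_cosh_real[of "\<bar>a\<bar>"] by simp

lemma sinh_K_integrable:
  fixes x \<nu> :: real
  assumes "x > 0"
  shows "set_integrable lborel {0<..} (\<lambda>t. sinh t * sinh (\<nu> * t) * exp (- x * cosh t))"
proof (rule set_integrable_bound[OF K_moment_integrable[OF assms, of 1 \<nu>]])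
  show "set_borel_measurable lborel {0<..} (\<lambda>t. sinh t * sinh (\<nu> * t) * exp (- x * cosh t))"
    by (intro set_borel_measurable_continuous_on continuous_intros) auto
  have "\<bar>sinh t * sinh (\<nu> * t) * exp (- x * cosh t)\<bar> \<le> \<bar>cosh t ^ 1 * exp (- x * cosh t) * cosh (\<nu> * t)\<bar>"
    for t
  proof -
    have "\<bar>sinh t * sinh (\<nu> * t) * exp (- x * cosh t)\<bar> = \<bar>sinh t\<bar> * \<bar>sinh (\<nu> * t)\<bar> * exp (- x * cosh t)"
      by (simp add: abs_mult)
    also have "\<dots> \<le> cosh t * cosh (\<nu> * t) * exp (- x * cosh t)"
      by (intro mult_mono abs_sinh_le_cosh) auto
    finally show ?thesis
      by (simp add: mult_ac)
  qed
  then show "AE t in lborel. t \<in> {0<..} \<longrightarrow> norm (sinh t * sinh (\<nu> * t) * exp (- x * cosh t))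
      \<le> norm (cosh t ^ 1 * exp (- x * cosh t) * cosh (\<nu> * t))"
    by auto
qed

lemma K_moment_integration_by_parts:
  fixes x \<nu> :: real
  assumes x: "x > 0"
  shows "\<nu> * K_moment 0 \<nu> x = x * (LINT t:{0<..}|lborel. sinh t * sinh (\<nu> * t) * exp (- x * cosh t))"
proof -
  define s where "s t = sinh t * sinh (\<nu> * t) * exp (- x * cosh t)" for t
  define F where "F t = exp (- x * cosh t) * sinh (\<nu> * t)" for t
  define f where "f t = \<nu> * (cosh t ^ 0 * exp (- x * cosh t) * cosh (\<nu> * t)) - x * s t" for t
  note int0 = K_moment_integrable[OF x, of 0 \<nu>]
  have int_s: "set_integrable lborel {0<..} s"
    unfolding s_def by (rule sinh_K_integrable[OF x])
  have "(LBINT t=ereal 0..\<infinity>. f t) = 0 - 0"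
  proof (rule interval_integral_FTC_integrable)
    fix t :: real
    show "(F has_vector_derivative f t) (at t)"
      unfolding has_real_derivative_iff_has_vector_derivative[symmetric] F_def f_def s_def
      by (auto intro!: derivative_eq_intros simp: algebra_simps)
    show "isCont f t"
      unfolding f_def s_def by (intro continuous_intros)
  next
    have "einterval (ereal 0) \<infinity> = {0<..}"
      by (auto simp: einterval_iff)
    then show "set_integrable lborel (einterval (ereal 0) \<infinity>) f"
      unfolding f_def using int0 int_s by auto
    show "((F \<circ> real_of_ereal) \<longlongrightarrow> 0) (at_right (ereal 0))"
      unfolding ereal_tendsto_simps1 F_def by (rule tendsto_eq_intros refl | simp)+
    show "((F \<circ> real_of_ereal) \<longlongrightarrow> 0) (at_left \<infinity>)"
      unfolding ereal_tendsto_simps1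
    proof (rule Lim_null_comparison)
      have "((\<lambda>t::real. exp (- t)) \<longlongrightarrow> 0) at_top"
        using filterlim_compose[OF exp_at_bot filterlim_uminus_at_bot_at_top] by simp
      then show "((\<lambda>t. exp ((real 0 + \<bar>\<nu>\<bar> + 1)\<^sup>2 / x) * exp (- t)) \<longlongrightarrow> 0) at_top"
        by (rule tendsto_mult_right_zero)
      show "\<forall>\<^sub>F t in at_top. norm (F t) \<le> exp ((real 0 + \<bar>\<nu>\<bar> + 1)\<^sup>2 / x) * exp (- t)"
        using eventually_ge_at_top[of "0::real"]
      proof eventually_elim
        case (elim t)
        have "norm (F t) \<le> \<bar>cosh t ^ 0 * exp (- x * cosh t) * cosh (\<nu> * t)\<bar>"
          unfolding F_def by (simp add: abs_mult mult_left_mono abs_sinh_le_cosh)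
        also have "\<dots> \<le> exp ((real 0 + \<bar>\<nu>\<bar> + 1)\<^sup>2 / x) * exp (- t)"
          by (rule K_moment_integrand_le[OF elim x])
        finally show ?case .
      qed
    qed
  qed auto
  moreover have "(LBINT t=ereal 0..\<infinity>. f t) = \<nu> * K_moment 0 \<nu> x - x * (LINT t:{0<..}|lborel. s t)"
    unfolding interval_integral_to_infinity_eq f_def K_moment_def using int0 int_s
    by (simp add: set_integral_diff)
  ultimately show ?thesis
    by (simp add: s_def)
qed

lemma K_moment_recurrence:
  fixes x \<nu> :: real
  assumes x: "x > 0"
  shows "\<nu> * K_moment 0 \<nu> x + x * K_moment 1 \<nu> x = x * K_moment 0 (\<nu> + 1) x"
proof -
  define s where "s t = sinh t * sinh (\<nu> * t) * exp (- x * cosh t)" for t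
  have "K_moment 0 (\<nu> + 1) x = (LINT t:{0<..}|lborel. cosh t ^ 1 * exp (- x * cosh t) * cosh (\<nu> * t) + s t)"
    unfolding K_moment_def s_def
    by (intro set_lebesgue_integral_cong) (auto simp: distrib_right cosh_add algebra_simps)
  also have "\<dots> = K_moment 1 \<nu> x + (LINT t:{0<..}|lborel. s t)"
    unfolding K_moment_def s_def using K_moment_integrable[OF x, of 1 \<nu>] sinh_K_integrable[OF x, of \<nu>]
    by (simp add: set_integral_add)
  finally show ?thesis
    using K_moment_integration_by_parts[OF x, of \<nu>] by (simp add: s_def algebra_simps)
qed

lemma K_moment_le_exp_decay:
  fixes x x1 \<nu> :: real
  assumes x1: "x1 > 0" and "x1 \<le> x"
  shows "K_moment n \<nu> x \<le> exp (- (x - x1)) * K_moment n \<nu> x1"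
proof -
  have x: "x > 0"
    using assms by auto
  have "K_moment n \<nu> x \<le> (LINT t:{0<..}|lborel. exp (- (x - x1)) * (cosh t ^ n * exp (- x1 * cosh t) * cosh (\<nu> * t)))"
    unfolding K_moment_def
  proof (intro set_integral_mono)
    show "set_integrable lborel {0<..} (\<lambda>t. cosh t ^ n * exp (- x * cosh t) * cosh (\<nu> * t))"
      by (rule K_moment_integrable[OF x])
    show "set_integrable lborel {0<..} (\<lambda>t. exp (- (x - x1)) * (cosh t ^ n * exp (- x1 * cosh t) * cosh (\<nu> * t)))"
      using K_moment_integrable[OF x1] by (rule set_integrable_mult_right)
    fix t :: real
    have "(x - x1) * 1 \<le> (x - x1) * cosh t"
      using cosh_real_ge_1[of t] assms by (intro mult_left_mono) auto
    then have "exp (- x * cosh t) \<le> exp (- (x - x1)) * exp (- x1 * cosh t)"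
      by (simp add: exp_add[symmetric] algebra_simps)
    then show "cosh t ^ n * exp (- x * cosh t) * cosh (\<nu> * t)
        \<le> exp (- (x - x1)) * (cosh t ^ n * exp (- x1 * cosh t) * cosh (\<nu> * t))"
      by (simp add: mult_right_mono mult_left_mono cosh_real_pos less_imp_le mult_ac)
  qed
  also have "\<dots> = exp (- (x - x1)) * K_moment n \<nu> x1"
    unfolding K_moment_def by simp
  finally show ?thesis .
qed

text \<open>In fact \<open>z\<^sup>\<nu> K\<^sub>\<nu>\<^sub>+\<^sub>1(z) \<sim> 2\<^sup>\<nu> \<Gamma>(\<nu> + 1) / z\<close>. For \<open>z = exp (- T)\<close> it suffices to keep the
  part \<open>T - 1 \<le> t \<le> T\<close> of the integral, where \<open>z cosh t \<le> 1\<close>.\<close>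

lemma K_moment_powr_unbounded_at_0:
  fixes \<nu> B :: real
  assumes "\<nu> \<ge> -1"
  shows "\<exists>z>0. B < z powr \<nu> * K_moment 0 (\<nu> + 1) z"
proof -
  define T where "T = \<nu> + 3 + 2 * \<bar>B\<bar>"
  define z where "z = exp (- T)"
  define m where "m = exp (- 1) * cosh ((\<nu> + 1) * (T - 1))"
  have T: "T - 1 > 0"
    using assms unfolding T_def by auto
  have z: "z > 0"
    unfolding z_def by simp
  have integrand_ge: "m \<le> cosh t ^ 0 * exp (- z * cosh t) * cosh ((\<nu> + 1) * t)"
    if t: "t \<in> {T - 1..T}" for t
  proof -
    have "exp \<bar>t\<bar> \<le> exp T"
      using t T by simp
    then have "cosh t \<le> exp T"
      using cosh_le_exp_abs[of t] by linarith
    then have "z * cosh t \<le> 1"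
      unfolding z_def using mult_left_mono[of "cosh t" "exp T" "exp (- T)"] by (simp add: exp_minus field_simps)
    then have "exp (- 1) \<le> exp (- z * cosh t)"
      by simp
    moreover have "cosh ((\<nu> + 1) * (T - 1)) \<le> cosh ((\<nu> + 1) * t)"
      using t T assms by (subst cosh_real_nonneg_le_iff) (auto intro!: mult_left_mono)
    ultimately show ?thesis
      unfolding m_def by (simp add: mult_mono)
  qed
  have indicator_eq: "(\<lambda>t. indicator {0<..} t *\<^sub>R (indicator {T - 1..T} t * m)) = (\<lambda>t. indicator {T - 1..T} t * m)"
    using T by (auto simp: indicator_def fun_eq_iff)
  have "m = (LINT t:{0<..}|lborel. indicator {T - 1..T} t * m)"
    unfolding set_lebesgue_integral_def indicator_eq by simp
  also have "\<dots> \<le> K_moment 0 (\<nu> + 1) z"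
    unfolding K_moment_def
  proof (rule set_integral_mono[OF _ K_moment_integrable[OF z]])
    show "set_integrable lborel {0<..} (\<lambda>t. indicator {T - 1..T} t * m)"
      unfolding set_integrable_def indicator_eq by (intro integrable_mult_left integrable_real_indicator) auto
    show "indicator {T - 1..T} t * m \<le> cosh t ^ 0 * exp (- z * cosh t) * cosh ((\<nu> + 1) * t)" for t
      using integrand_ge[of t] by (cases "t \<in> {T - 1..T}") (auto simp: indicator_def m_def)
  qed
  finally have K: "m \<le> K_moment 0 (\<nu> + 1) z" .
  have "1 + (1 + 2 * \<bar>B\<bar>) \<le> exp (1 + 2 * \<bar>B\<bar>)"
    by (rule exp_ge_add_one_self)
  also have "exp (1 + 2 * \<bar>B\<bar>) / 2 = exp (- (\<nu> * T)) * (exp (- 1) * (exp ((\<nu> + 1) * (T - 1)) / 2))"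
    unfolding T_def by (simp add: exp_add[symmetric] algebra_simps)
  also have "\<dots> \<le> exp (- (\<nu> * T)) * m"
    unfolding m_def cosh_def by (intro mult_left_mono) auto
  also have "\<dots> \<le> z powr \<nu> * K_moment 0 (\<nu> + 1) z"
    using K by (simp add: z_def powr_def)
  finally show ?thesis
    using z by (intro exI[of _ z]) auto
qed

section \<open>The power series of \<open>I\<close>\<close>

definition besselI_coeff :: "real \<Rightarrow> nat \<Rightarrow> real" where
  "besselI_coeff \<nu> k = inverse (fact k * Gamma (real k + \<nu> + 1))"

text \<open>\<open>besselI_series \<nu> j\<close> is the \<open>j\<close>-th derivative of the entire function \<open>besselI_series \<nu> 0\<close>.\<close>
definition besselI_series :: "real \<Rightarrow> nat \<Rightarrow> real \<Rightarrow> real" where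
  "besselI_series \<nu> j z = (\<Sum>k. (diffs ^^ j) (besselI_coeff \<nu>) k * z ^ k)"

lemma besselI_coeff_pos: "\<nu> > -1 \<Longrightarrow> besselI_coeff \<nu> k > 0"
  unfolding besselI_coeff_def by (intro positive_imp_inverse_positive mult_pos_pos Gamma_real_pos) auto

lemma besselI_coeff_Suc:
  assumes "\<nu> > -1"
  shows "besselI_coeff \<nu> (Suc k) = besselI_coeff \<nu> k / ((real k + 1) * (real k + \<nu> + 1))"
proof -
  have "real k + \<nu> + 1 \<notin> \<int>\<^sub>\<le>\<^sub>0"
    using assms nonpos_Ints_nonpos by fastforce
  from Gamma_plus1[OF this]
  have "Gamma (real (Suc k) + \<nu> + 1) = (real k + \<nu> + 1) * Gamma (real k + \<nu> + 1)"
    by (simp add: add_ac)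
  then show ?thesis
    unfolding besselI_coeff_def by (simp add: field_simps)
qed

lemma summable_besselI_coeff:
  assumes nu: "\<nu> > -1"
  shows "summable (\<lambda>k. besselI_coeff \<nu> k * z ^ k)"
proof (rule summable_ratio_test[where c="1/2" and N="nat \<lceil>2 * \<bar>z\<bar>\<rceil> + 1"])
  fix n assume n: "nat \<lceil>2 * \<bar>z\<bar>\<rceil> + 1 \<le> n"
  have "2 * \<bar>z\<bar> \<le> real n"
    using n by linarith
  also have "\<dots> \<le> (real n + 1) * 1"
    by simp
  also have "\<dots> \<le> (real n + 1) * (real n + \<nu> + 1)"
    using n nu by (intro mult_left_mono) auto
  finally have big: "2 * \<bar>z\<bar> \<le> (real n + 1) * (real n + \<nu> + 1)" .
  have pos: "(real n + 1) * (real n + \<nu> + 1) > 0"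
    using nu by (intro mult_pos_pos) auto
  have "norm (besselI_coeff \<nu> (Suc n) * z ^ Suc n)
      = norm (besselI_coeff \<nu> n * z ^ n) * (\<bar>z\<bar> / ((real n + 1) * (real n + \<nu> + 1)))"
    using nu by (simp add: besselI_coeff_Suc[OF nu] abs_mult abs_divide mult_ac)
  also have "\<dots> \<le> norm (besselI_coeff \<nu> n * z ^ n) * (1 / 2)"
    using pos big by (intro mult_left_mono) (simp_all add: pos_divide_le_eq)
  finally show "norm (besselI_coeff \<nu> (Suc n) * z ^ Suc n) \<le> 1 / 2 * norm (besselI_coeff \<nu> n * z ^ n)"
    by (simp add: mult.commute)
qed simp

lemma summable_besselI_series:
  assumes "\<nu> > -1"
  shows "summable (\<lambda>k. (diffs ^^ j) (besselI_coeff \<nu>) k * z ^ k)"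
proof (induction j arbitrary: z)
  case 0
  then show ?case
    using summable_besselI_coeff[OF assms] by simp
next
  case (Suc j)
  then show ?case
    by (simp add: termdiff_converges_all)
qed

lemma has_real_derivative_besselI_series:
  assumes "\<nu> > -1"
  shows "(besselI_series \<nu> j has_real_derivative besselI_series \<nu> (Suc j) z) (at z)"
  unfolding besselI_series_def[abs_def]
  using termdiffs_strong_converges_everywhere[of "(diffs ^^ j) (besselI_coeff \<nu>)" z]
    summable_besselI_series[OF assms]
  by simp

lemma continuous_on_besselI_series: "\<nu> > -1 \<Longrightarrow> continuous_on A (besselI_series \<nu> j)"
  using has_real_derivative_besselI_series DERIV_isCont by (blast intro: continuous_at_imp_continuous_on)

lemma besselI_series_coeff_nonneg:
  assumes "\<nu> > -1"
  shows "(diffs ^^ j) (besselI_coeff \<nu>) k \<ge> 0"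
proof (induction j arbitrary: k)
  case 0
  then show ?case
    using besselI_coeff_pos[OF assms, of k] by simp
next
  case (Suc j)
  then show ?case
    by (simp add: diffs_def)
qed

lemma besselI_series_nonneg: "\<nu> > -1 \<Longrightarrow> z \<ge> 0 \<Longrightarrow> besselI_series \<nu> j z \<ge> 0"
  unfolding besselI_series_def using summable_besselI_series besselI_series_coeff_nonneg
  by (intro suminf_nonneg) auto

lemma besselI_series_mono: "\<nu> > -1 \<Longrightarrow> 0 \<le> z \<Longrightarrow> z \<le> Z \<Longrightarrow> besselI_series \<nu> j z \<le> besselI_series \<nu> j Z"
  unfolding besselI_series_def using summable_besselI_series besselI_series_coeff_nonneg
  by (intro suminf_le mult_left_mono power_mono) auto

lemma inverse_Gamma_le_besselI_series:
  assumes "\<nu> > -1" "z \<ge> 0"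
  shows "inverse (Gamma (\<nu> + 1)) \<le> besselI_series \<nu> 0 z"
proof -
  have "(\<Sum>k\<in>{0}. (diffs ^^ 0) (besselI_coeff \<nu>) k * z ^ k) \<le> besselI_series \<nu> 0 z"
    unfolding besselI_series_def using summable_besselI_coeff[OF assms(1)] besselI_coeff_pos[OF assms(1)] assms(2)
    by (intro sum_le_suminf) (auto intro!: mult_nonneg_nonneg simp: less_imp_le)
  then show ?thesis
    by (simp add: besselI_coeff_def)
qed

lemma besselI_eq_besselI_series:
  assumes "\<nu> > -1" "x > 0"
  shows "besselI \<nu> x = (x / 2) powr \<nu> * besselI_series \<nu> 0 ((x / 2)\<^sup>2)"
proof -
  define X where "X = x / 2"
  have X: "X > 0"
    using assms(2) by (simp add: X_def)
  have "besselI \<nu> x = (\<Sum>k. X powr \<nu> * (besselI_coeff \<nu> k * (X\<^sup>2) ^ k))"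
    unfolding besselI_def X_def[symmetric]
  proof (rule suminf_cong)
    fix k
    have "X powr (2 * real k + \<nu>) = X powr (real (2 * k)) * X powr \<nu>"
      by (simp add: powr_add)
    also have "\<dots> = (X\<^sup>2) ^ k * X powr \<nu>"
      using powr_realpow[OF X, of "2 * k"] by (simp add: power_mult)
    finally show "X powr (2 * real k + \<nu>) / (fact k * Gamma (real k + \<nu> + 1))
        = X powr \<nu> * (besselI_coeff \<nu> k * (X\<^sup>2) ^ k)"
      by (simp add: besselI_coeff_def divide_inverse mult_ac)
  qed
  also have "\<dots> = X powr \<nu> * besselI_series \<nu> 0 (X\<^sup>2)"
    unfolding besselI_series_def using summable_besselI_series[OF assms(1), of 0] by (simp add: suminf_mult)
  finally show ?thesis
    by (simp add: X_def)
qed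

section \<open>Smoothness and integrals of the Bessel factors\<close>

lemma has_real_derivative_K_moment_affine:
  fixes \<sigma> \<mu> x :: real
  assumes "\<sigma> > 0" "x > \<mu>"
  shows "((\<lambda>x. K_moment n \<nu> ((x - \<mu>) / \<sigma>)) has_real_derivative - K_moment (Suc n) \<nu> ((x - \<mu>) / \<sigma>) / \<sigma>) (at x)"
proof -
  have "((\<lambda>x. (x - \<mu>) / \<sigma>) has_real_derivative 1 / \<sigma>) (at x)"
    using assms by (auto intro!: derivative_eq_intros)
  moreover have "(x - \<mu>) / \<sigma> > 0"
    using assms by simp
  ultimately show ?thesis
    using DERIV_chain2[OF has_real_derivative_K_moment] by fastforce
qed

lemma thrice_differentiable_on_K_moment_affine:
  assumes "\<sigma> > 0"
  shows "thrice_differentiable_on (\<lambda>x. K_moment n \<nu> ((x - \<mu>) / \<sigma>)) {\<mu><..}"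
proof (rule thrice_differentiable_onI)
  fix x :: real assume "x \<in> {\<mu><..}"
  then have x: "x > \<mu>" by simp
  have d: "((\<lambda>x. K_moment m \<nu> ((x - \<mu>) / \<sigma>)) has_real_derivative - K_moment (Suc m) \<nu> ((x - \<mu>) / \<sigma>) / \<sigma>) (at x)"
    for m
    by (rule has_real_derivative_K_moment_affine[OF assms x])
  show "((\<lambda>x. K_moment n \<nu> ((x - \<mu>) / \<sigma>)) has_real_derivative - K_moment (Suc n) \<nu> ((x - \<mu>) / \<sigma>) / \<sigma>) (at x)"
    by (rule d)
  show "((\<lambda>x. - K_moment (Suc n) \<nu> ((x - \<mu>) / \<sigma>) / \<sigma>) has_real_derivative
      K_moment (Suc (Suc n)) \<nu> ((x - \<mu>) / \<sigma>) / \<sigma> / \<sigma>) (at x)"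
    using DERIV_cdivide[OF DERIV_minus[OF d[of "Suc n"]], of \<sigma>] by simp
  have "(\<lambda>x. K_moment (Suc (Suc n)) \<nu> ((x - \<mu>) / \<sigma>)) differentiable (at x)"
    using d[of "Suc (Suc n)"] real_differentiable_def by blast
  then show "(\<lambda>x. K_moment (Suc (Suc n)) \<nu> ((x - \<mu>) / \<sigma>) / \<sigma> / \<sigma>) differentiable (at x)"
    using assms by (intro derivative_intros) auto
qed simp

lemma thrice_differentiable_on_powr_shift: "thrice_differentiable_on (\<lambda>x. (x - \<mu>) powr a) {\<mu><..}"
proof (rule thrice_differentiable_onI)
  fix x :: real assume "x \<in> {\<mu><..}"
  then have x: "x - \<mu> > 0" by simp
  have d: "((\<lambda>x. (x - \<mu>) powr b) has_real_derivative b * (x - \<mu>) powr (b - 1)) (at x)" for b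
    using x by (auto intro!: derivative_eq_intros)
  show "((\<lambda>x. (x - \<mu>) powr a) has_real_derivative a * (x - \<mu>) powr (a - 1)) (at x)"
    by (rule d)
  show "((\<lambda>x. a * (x - \<mu>) powr (a - 1)) has_real_derivative a * ((a - 1) * (x - \<mu>) powr (a - 1 - 1))) (at x)"
    by (rule DERIV_cmult[OF d])
  have "(\<lambda>x. (x - \<mu>) powr (a - 1 - 1)) differentiable (at x)"
    using d real_differentiable_def by blast
  then show "(\<lambda>x. a * ((a - 1) * (x - \<mu>) powr (a - 1 - 1))) differentiable (at x)"
    by (intro derivative_intros)
qed simp

lemma has_real_derivative_besselI_series_comp:
  assumes "\<nu> > -1" "(f has_real_derivative f') (at x)"
  shows "((\<lambda>x. besselI_series \<nu> j (f x)) has_real_derivative besselI_series \<nu> (Suc j) (f x) * f') (at x)"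
  by (rule DERIV_chain2[OF has_real_derivative_besselI_series[OF assms(1)] assms(2)])

lemma thrice_differentiable_on_besselI_series_square:
  fixes c \<mu> :: real
  assumes "\<nu> > -1"
  shows "thrice_differentiable_on (\<lambda>x. besselI_series \<nu> j ((c * (x - \<mu>))\<^sup>2)) S"
proof -
  define q where "q x = (c * (x - \<mu>))\<^sup>2" for x
  have dq: "(q has_real_derivative 2 * c\<^sup>2 * (x - \<mu>)) (at x)" for x
    unfolding q_def by (auto intro!: derivative_eq_intros simp: power2_eq_square)
  note dS = has_real_derivative_besselI_series_comp[OF assms]
  have "thrice_differentiable_on (\<lambda>x. besselI_series \<nu> j (q x)) UNIV"
  proof (rule thrice_differentiable_onI)
    fix x :: real
    show "((\<lambda>x. besselI_series \<nu> j (q x)) has_real_derivative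
        besselI_series \<nu> (Suc j) (q x) * (2 * c\<^sup>2 * (x - \<mu>))) (at x)"
      by (rule dS[OF dq])
    show "((\<lambda>x. besselI_series \<nu> (Suc j) (q x) * (2 * c\<^sup>2 * (x - \<mu>))) has_real_derivative
        besselI_series \<nu> (Suc (Suc j)) (q x) * (2 * c\<^sup>2 * (x - \<mu>)) * (2 * c\<^sup>2 * (x - \<mu>))
        + besselI_series \<nu> (Suc j) (q x) * (2 * c\<^sup>2)) (at x)"
      by (auto intro!: derivative_eq_intros dS[OF dq])
    show "(\<lambda>x. besselI_series \<nu> (Suc (Suc j)) (q x) * (2 * c\<^sup>2 * (x - \<mu>)) * (2 * c\<^sup>2 * (x - \<mu>))
        + besselI_series \<nu> (Suc j) (q x) * (2 * c\<^sup>2)) differentiable (at x)"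
    proof -
      have "(\<lambda>x. besselI_series \<nu> i (q x)) differentiable (at x)" for i
        using dS[OF dq] real_differentiable_def by blast
      then show ?thesis
        by (auto intro!: derivative_intros)
    qed
  qed simp
  then show ?thesis
    by (simp add: q_def thrice_differentiable_on_def)
qed

lemma besselI_nonneg: "\<nu> > -1 \<Longrightarrow> x > 0 \<Longrightarrow> 0 \<le> besselI \<nu> x"
  by (simp add: besselI_eq_besselI_series besselI_series_nonneg)

lemma besselI_le_powr:
  assumes "\<nu> > -1" "0 < x" "x \<le> X"
  shows "besselI \<nu> x \<le> (x / 2) powr \<nu> * besselI_series \<nu> 0 ((X / 2)\<^sup>2)"
  unfolding besselI_eq_besselI_series[OF assms(1,2)] using assms
  by (intro mult_left_mono besselI_series_mono power_mono) auto

lemma powr_le_mult_exp: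
  fixes a \<epsilon> \<nu> :: real
  assumes "0 < a" "0 < \<epsilon>"
  shows "\<exists>P. \<forall>t\<ge>a. t powr \<nu> \<le> P * exp (\<epsilon> * t)"
proof (cases "\<nu> > 0")
  case True
  have "t powr \<nu> \<le> exp (\<nu> * (ln (\<nu> / \<epsilon>) - 1)) * exp (\<epsilon> * t)" if "t \<ge> a" for t
  proof -
    have t: "t > 0"
      using that assms by simp
    have "ln (\<epsilon> / \<nu> * t) \<le> \<epsilon> / \<nu> * t - 1"
      using ln_le_minus_one[of "\<epsilon> / \<nu> * t"] t True assms by simp
    then have "\<nu> * ln t \<le> \<nu> * (ln (\<nu> / \<epsilon>) - 1) + \<epsilon> * t"
      using t True assms by (simp add: ln_mult ln_div field_simps)
    then show ?thesis
      using t by (simp add: powr_def exp_add[symmetric])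
  qed
  then show ?thesis by blast
next
  case False
  have "t powr \<nu> \<le> a powr \<nu> * exp (\<epsilon> * t)" if "t \<ge> a" for t
  proof -
    have "t powr \<nu> \<le> a powr \<nu>"
      using False that assms by (intro powr_mono2') auto
    also have "\<dots> \<le> a powr \<nu> * exp (\<epsilon> * t)"
      using that assms by (intro mult_le_cancel_left1[THEN iffD2]) auto
    finally show ?thesis .
  qed
  then show ?thesis by blast
qed

lemma continuous_on_besselI_weight:
  fixes \<nu> \<sigma> :: real and G :: "real \<Rightarrow> real"
  assumes "\<nu> > -1" "\<sigma> > 0" "continuous_on UNIV G"
  shows "continuous_on {0<..} (\<lambda>t. \<bar>t\<bar> powr \<nu> * besselI \<nu> (\<bar>t\<bar> / \<sigma>) * G t)"
proof -
  have "continuous_on {0<..} (\<lambda>t. t powr \<nu> * ((t / \<sigma> / 2) powr \<nu> * besselI_series \<nu> 0 ((t / \<sigma> / 2)\<^sup>2)) * G t)"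
    using assms by (intro continuous_intros continuous_on_compose2[OF continuous_on_besselI_series[of \<nu> UNIV]]
        continuous_on_subset[OF assms(3)]) auto
  then show ?thesis
    by (rule continuous_on_eq) (use assms in \<open>simp add: besselI_eq_besselI_series\<close>)
qed

lemma interval_integrable_besselI_weight:
  fixes \<nu> \<sigma> C Y :: real and G :: "real \<Rightarrow> real"
  assumes \<nu>: "\<nu> > -1/2" and \<sigma>: "\<sigma> > 0" and G: "continuous_on UNIV G" "\<And>t. \<bar>G t\<bar> \<le> C" and Y: "Y > 0"
  shows "interval_lebesgue_integrable lborel (ereal 0) (ereal Y) (\<lambda>t. \<bar>t\<bar> powr \<nu> * besselI \<nu> (\<bar>t\<bar> / \<sigma>) * G t)"
proof -
  define \<phi> where "\<phi> t = \<bar>t\<bar> powr \<nu> * besselI \<nu> (\<bar>t\<bar> / \<sigma>) * G t" for t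
  define M where "M = C * besselI_series \<nu> 0 ((Y / \<sigma> / 2)\<^sup>2) / (2 * \<sigma>) powr \<nu>"
  have "set_integrable lborel {0<..<Y} \<phi>"
  proof (rule set_integrable_bound)
    show "set_integrable lborel {0<..<Y} (\<lambda>t. M * t powr (2 * \<nu>))"
      using set_integrable_powr_Ioc_0[of "2 * \<nu>" Y] \<nu> Y
      by (intro set_integrable_mult_right) (auto intro: set_integrable_subset)
    show "set_borel_measurable lborel {0<..<Y} \<phi>"
      unfolding \<phi>_def using continuous_on_besselI_weight[of \<nu> \<sigma> G] \<nu> \<sigma> G(1)
      by (intro set_borel_measurable_continuous_on) (auto intro: continuous_on_subset)
    have "\<bar>\<phi> t\<bar> \<le> M * t powr (2 * \<nu>)" if t: "t \<in> {0<..<Y}" for t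
    proof -
      have "\<bar>\<phi> t\<bar> = t powr \<nu> * besselI \<nu> (t / \<sigma>) * \<bar>G t\<bar>"
        using t \<nu> \<sigma> besselI_nonneg[of \<nu> "t / \<sigma>"] by (simp add: \<phi>_def abs_mult)
      also have "\<dots> \<le> t powr \<nu> * ((t / \<sigma> / 2) powr \<nu> * besselI_series \<nu> 0 ((Y / \<sigma> / 2)\<^sup>2)) * C"
        using t \<nu> \<sigma> G(2)[of t] besselI_nonneg[of \<nu> "t / \<sigma>"] besselI_series_nonneg[of \<nu> _ 0]
        by (intro mult_mono besselI_le_powr divide_right_mono) auto
      also have "\<dots> = M * (t powr \<nu> * t powr \<nu>)"
      proof -
        have "(t / \<sigma> / 2) powr \<nu> = t powr \<nu> / (2 * \<sigma>) powr \<nu>"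
          using t \<sigma> by (simp add: powr_divide mult.commute)
        then show ?thesis
          by (simp add: M_def)
      qed
      also have "t powr \<nu> * t powr \<nu> = t powr (2 * \<nu>)"
        by (simp add: powr_add[symmetric])
      finally show ?thesis .
    qed
    moreover have "M \<ge> 0"
      using G(2)[of 0] \<nu> by (simp add: M_def besselI_series_nonneg)
    ultimately show "AE t in lborel. t \<in> {0<..<Y} \<longrightarrow> norm (\<phi> t) \<le> norm (M * t powr (2 * \<nu>))"
      by (simp add: abs_mult)
  qed
  moreover have "einterval (ereal 0) (ereal Y) = {0<..<Y}"
    by (auto simp: einterval_iff)
  ultimately show ?thesis
    unfolding interval_lebesgue_integrable_def \<phi>_def using Y by simp
qed

lemma has_real_derivative_besselI_integral:
  fixes \<nu> \<sigma> C y :: real and G :: "real \<Rightarrow> real"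
  assumes \<nu>: "\<nu> > -1/2" and \<sigma>: "\<sigma> > 0" and G: "continuous_on UNIV G" "\<And>t. \<bar>G t\<bar> \<le> C" and y: "y > 0"
  shows "((\<lambda>Y. LBINT t=0..ereal Y. \<bar>t\<bar> powr \<nu> * besselI \<nu> (\<bar>t\<bar> / \<sigma>) * G t)
           has_real_derivative \<bar>y\<bar> powr \<nu> * besselI \<nu> (\<bar>y\<bar> / \<sigma>) * G y) (at y)"
  using has_real_derivative_interval_integral_upper[OF continuous_on_besselI_weight
      interval_integrable_besselI_weight[OF \<nu> \<sigma> G] y] \<nu> \<sigma> G(1)
  by (simp add: zero_ereal_def)

lemma continuous_on_besselK_weight:
  fixes \<nu> \<sigma> :: real and G :: "real \<Rightarrow> real"
  assumes "\<sigma> > 0" "continuous_on UNIV G"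
  shows "continuous_on {0<..} (\<lambda>t. \<bar>t\<bar> powr \<nu> * besselK \<nu> (\<bar>t\<bar> / \<sigma>) * G t)"
proof -
  have "continuous_on {0<..} (\<lambda>t. t powr \<nu> * K_moment 0 \<nu> (t / \<sigma>) * G t)"
    using assms by (intro continuous_intros continuous_on_compose2[OF continuous_on_K_moment]
        continuous_on_subset[OF assms(2)]) auto
  then show ?thesis
    by (rule continuous_on_eq) (simp add: besselK_eq_K_moment)
qed

lemma set_integrable_besselK_weight:
  fixes \<nu> \<sigma> C a :: real and G :: "real \<Rightarrow> real"
  assumes \<sigma>: "\<sigma> > 0" and G: "continuous_on UNIV G" "\<And>t. \<bar>G t\<bar> \<le> C" and a: "a > 0"
  shows "set_integrable lborel {a<..} (\<lambda>t. \<bar>t\<bar> powr \<nu> * besselK \<nu> (\<bar>t\<bar> / \<sigma>) * G t)"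
proof -
  define \<psi> where "\<psi> t = \<bar>t\<bar> powr \<nu> * besselK \<nu> (\<bar>t\<bar> / \<sigma>) * G t" for t
  obtain P where P: "\<And>t. t \<ge> a \<Longrightarrow> t powr \<nu> \<le> P * exp (1 / (2 * \<sigma>) * t)"
    using powr_le_mult_exp[of a "1 / (2 * \<sigma>)" \<nu>] a \<sigma> by auto
  have "0 < P * exp (1 / (2 * \<sigma>) * a)"
    using P[of a] a powr_gt_zero[of a \<nu>] by linarith
  then have P0: "P > 0"
    by (simp add: zero_less_mult_iff)
  have Ka: "0 \<le> K_moment 0 \<nu> (a / \<sigma>)"
    using a \<sigma> by (intro K_moment_nonneg) simp
  define M where "M = P * exp (a / \<sigma>) * K_moment 0 \<nu> (a / \<sigma>) * C"
  show ?thesis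
    unfolding \<psi>_def[symmetric]
  proof (rule set_integrable_bound)
    show "set_integrable lborel {a<..} (\<lambda>t. M * exp (- (1 / (2 * \<sigma>)) * t))"
      using set_integrable_exp_neg_Ioi[of "1 / (2 * \<sigma>)" a] \<sigma> by (intro set_integrable_mult_right) auto
    show "set_borel_measurable lborel {a<..} \<psi>"
      unfolding \<psi>_def using continuous_on_besselK_weight[OF \<sigma> G(1), of \<nu>] a
      by (intro set_borel_measurable_continuous_on) (auto intro: continuous_on_subset)
    have "\<bar>\<psi> t\<bar> \<le> M * exp (- (1 / (2 * \<sigma>)) * t)" if t: "t > a" for t
    proof -
      have "K_moment 0 \<nu> (t / \<sigma>) \<le> exp (- (t / \<sigma> - a / \<sigma>)) * K_moment 0 \<nu> (a / \<sigma>)"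
        using t a \<sigma> by (intro K_moment_le_exp_decay) (auto simp: divide_right_mono)
      also have "exp (- (t / \<sigma> - a / \<sigma>)) = exp (a / \<sigma>) * exp (- t / \<sigma>)"
        by (simp add: mult_exp_exp)
      finally have K: "K_moment 0 \<nu> (t / \<sigma>) \<le> exp (a / \<sigma>) * K_moment 0 \<nu> (a / \<sigma>) * exp (- t / \<sigma>)"
        by (simp add: mult_ac)
      have K0: "0 \<le> K_moment 0 \<nu> (t / \<sigma>)"
        using t a \<sigma> by (intro K_moment_nonneg) simp
      have "\<bar>\<psi> t\<bar> = t powr \<nu> * K_moment 0 \<nu> (t / \<sigma>) * \<bar>G t\<bar>"
        using t a K0 by (simp add: \<psi>_def besselK_eq_K_moment abs_mult)
      also have "\<dots> \<le> (P * exp (1 / (2 * \<sigma>) * t)) * (exp (a / \<sigma>) * K_moment 0 \<nu> (a / \<sigma>) * exp (- t / \<sigma>)) * C"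
        using P[of t] K K0 G(2)[of t] t P0 Ka by (intro mult_mono) auto
      also have "\<dots> = M * exp (- (1 / (2 * \<sigma>)) * t)"
        using \<sigma> by (simp add: M_def mult_exp_exp field_simps)
      finally show ?thesis .
    qed
    then show "AE t in lborel. t \<in> {a<..} \<longrightarrow> norm (\<psi> t) \<le> norm (M * exp (- (1 / (2 * \<sigma>)) * t))"
      by (auto intro: order.trans[OF _ abs_ge_self])
  qed
qed

lemma has_real_derivative_besselK_integral:
  fixes \<nu> \<sigma> C y :: real and G :: "real \<Rightarrow> real"
  assumes \<sigma>: "\<sigma> > 0" and G: "continuous_on UNIV G" "\<And>t. \<bar>G t\<bar> \<le> C" and y: "y > 0"
  shows "((\<lambda>Y. LBINT t=ereal Y..\<infinity>. \<bar>t\<bar> powr \<nu> * besselK \<nu> (\<bar>t\<bar> / \<sigma>) * G t)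
           has_real_derivative - (\<bar>y\<bar> powr \<nu> * besselK \<nu> (\<bar>y\<bar> / \<sigma>) * G y)) (at y)"
proof (rule has_real_derivative_interval_integral_lower_to_infinity)
  show "continuous_on {y / 2<..} (\<lambda>t. \<bar>t\<bar> powr \<nu> * besselK \<nu> (\<bar>t\<bar> / \<sigma>) * G t)"
    by (rule continuous_on_subset[OF continuous_on_besselK_weight[OF \<sigma> G(1)]]) (use y in auto)
  show "set_integrable lborel {y / 2<..} (\<lambda>t. \<bar>t\<bar> powr \<nu> * besselK \<nu> (\<bar>t\<bar> / \<sigma>) * G t)"
    using y by (intro set_integrable_besselK_weight[OF \<sigma> G]) simp
qed (use y in simp)

section \<open>The two solutions of the homogeneous equation\<close>

text \<open>With \<open>y = x - \<mu> > 0\<close> these are \<open>K\<^sub>\<nu>(y/\<sigma>) / (\<sigma>\<^sup>2 y\<^sup>\<nu>)\<close> and \<open>I\<^sub>\<nu>(y/\<sigma>) / (\<sigma>\<^sup>2 y\<^sup>\<nu>)\<close>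
  (\<open>svg_K_sol_eq\<close>, \<open>svg_I_sol_eq\<close>), written so that their smoothness is apparent.\<close>

definition svg_K_sol :: "real \<Rightarrow> real \<Rightarrow> real \<Rightarrow> real \<Rightarrow> real" where
  "svg_K_sol \<sigma> \<mu> \<nu> x = K_moment 0 \<nu> ((x - \<mu>) / \<sigma>) * (x - \<mu>) powr (- \<nu>) * inverse (\<sigma>\<^sup>2)"

definition svg_I_sol :: "real \<Rightarrow> real \<Rightarrow> real \<Rightarrow> real \<Rightarrow> real" where
  "svg_I_sol \<sigma> \<mu> \<nu> x = besselI_series \<nu> 0 ((inverse (2 * \<sigma>) * (x - \<mu>))\<^sup>2) * inverse (\<sigma>\<^sup>2 * (2 * \<sigma>) powr \<nu>)"

lemma thrice_differentiable_on_svg_K_sol: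
  "\<sigma> > 0 \<Longrightarrow> thrice_differentiable_on (svg_K_sol \<sigma> \<mu> \<nu>) {\<mu><..}"
  unfolding svg_K_sol_def[abs_def]
  by (intro thrice_differentiable_on_mult thrice_differentiable_on_K_moment_affine
      thrice_differentiable_on_powr_shift thrice_differentiable_on_const open_greaterThan)

lemma thrice_differentiable_on_svg_I_sol:
  "\<nu> > -1 \<Longrightarrow> open S \<Longrightarrow> thrice_differentiable_on (svg_I_sol \<sigma> \<mu> \<nu>) S"
  unfolding svg_I_sol_def[abs_def]
  by (intro thrice_differentiable_on_mult thrice_differentiable_on_besselI_series_square
      thrice_differentiable_on_const)

lemma deriv_svg_I_sol_nonneg:
  assumes "\<nu> > -1" "x \<ge> \<mu>"
  shows "deriv (svg_I_sol \<sigma> \<mu> \<nu>) x \<ge> 0"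
proof -
  define c where "c = inverse (2 * \<sigma>)"
  have "((\<lambda>x. (c * (x - \<mu>))\<^sup>2) has_real_derivative 2 * c\<^sup>2 * (x - \<mu>)) (at x)"
    by (auto intro!: derivative_eq_intros simp: power2_eq_square)
  from DERIV_cmult_right[OF has_real_derivative_besselI_series_comp[OF assms(1) this],
      of 0 "inverse (\<sigma>\<^sup>2 * (2 * \<sigma>) powr \<nu>)"]
  have "deriv (svg_I_sol \<sigma> \<mu> \<nu>) x
      = besselI_series \<nu> 1 ((c * (x - \<mu>))\<^sup>2) * (2 * c\<^sup>2 * (x - \<mu>)) * inverse (\<sigma>\<^sup>2 * (2 * \<sigma>) powr \<nu>)"
    unfolding svg_I_sol_def[abs_def] c_def[symmetric] by (intro DERIV_imp_deriv) simp
  also have "\<dots> \<ge> 0"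
    using assms besselI_series_nonneg[OF assms(1), of "(c * (x - \<mu>))\<^sup>2" 1] by simp
  finally show ?thesis .
qed

lemma has_real_derivative_svg_K_sol:
  fixes \<sigma> \<mu> \<nu> x :: real
  assumes \<sigma>: "\<sigma> > 0" and x: "x > \<mu>"
  shows "(svg_K_sol \<sigma> \<mu> \<nu> has_real_derivative
    - K_moment 0 (\<nu> + 1) ((x - \<mu>) / \<sigma>) * (x - \<mu>) powr (- \<nu>) / \<sigma> ^ 3) (at x)"
proof -
  define z where "z = (x - \<mu>) / \<sigma>"
  have z: "z > 0"
    using \<sigma> x by (simp add: z_def)
  define p where "p = (x - \<mu>) powr (- \<nu>)"
  have "(svg_K_sol \<sigma> \<mu> \<nu> has_real_derivative
      (- K_moment 1 \<nu> z / \<sigma> * p + K_moment 0 \<nu> z * (- \<nu> * (x - \<mu>) powr (- \<nu> - 1)))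
        * inverse (\<sigma>\<^sup>2)) (at x)"
    unfolding svg_K_sol_def[abs_def] z_def p_def
    using has_real_derivative_K_moment_affine[OF \<sigma> x, of 0 \<nu>] x
    by (auto intro!: derivative_eq_intros)
  also have "(x - \<mu>) powr (- \<nu> - 1) = p / (\<sigma> * z)"
    using \<sigma> x by (simp add: z_def p_def powr_diff)
  also have "(- K_moment 1 \<nu> z / \<sigma> * p + K_moment 0 \<nu> z * (- \<nu> * (p / (\<sigma> * z)))) * inverse (\<sigma>\<^sup>2)
      = - (\<nu> * K_moment 0 \<nu> z + z * K_moment 1 \<nu> z) * p / (\<sigma> ^ 3 * z)"
    using \<sigma> z by (simp add: field_simps power2_eq_square power3_eq_cube)
  also have "\<nu> * K_moment 0 \<nu> z + z * K_moment 1 \<nu> z = z * K_moment 0 (\<nu> + 1) z"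
    by (rule K_moment_recurrence[OF z])
  also have "- (z * K_moment 0 (\<nu> + 1) z) * p / (\<sigma> ^ 3 * z) = - K_moment 0 (\<nu> + 1) z * p / \<sigma> ^ 3"
    using z by simp
  finally show ?thesis
    by (simp add: z_def p_def)
qed

lemma svg_K_sol_eq:
  assumes "\<sigma> > 0" "x > \<mu>"
  shows "svg_K_sol \<sigma> \<mu> \<nu> x = besselK \<nu> ((x - \<mu>) / \<sigma>) / (\<sigma>\<^sup>2 * (x - \<mu>) powr \<nu>)"
  using assms by (simp add: svg_K_sol_def besselK_eq_K_moment powr_minus field_simps)

lemma svg_I_sol_eq:
  assumes "\<nu> > -1" "\<sigma> > 0" "x > \<mu>"
  shows "svg_I_sol \<sigma> \<mu> \<nu> x = besselI \<nu> ((x - \<mu>) / \<sigma>) / (\<sigma>\<^sup>2 * (x - \<mu>) powr \<nu>)"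
proof -
  have "((x - \<mu>) / \<sigma> / 2) powr \<nu> = (x - \<mu>) powr \<nu> / (2 * \<sigma>) powr \<nu>"
    using assms by (simp add: powr_divide mult.commute)
  moreover have "((x - \<mu>) / \<sigma> / 2)\<^sup>2 = (inverse (2 * \<sigma>) * (x - \<mu>))\<^sup>2"
    by (simp add: field_simps)
  ultimately show ?thesis
    using assms by (simp add: svg_I_sol_def besselI_eq_besselI_series field_simps)
qed

lemma svg_stein_sol_eq:
  fixes r \<sigma> \<mu> x :: real
  defines "\<nu> \<equiv> (r - 1) / 2"
  assumes "r > 0" "\<sigma> > 0" "x > \<mu>"
  shows "svg_stein_sol r \<sigma> \<mu> h x =
    - svg_K_sol \<sigma> \<mu> \<nu> x * (LBINT t=0..ereal (x - \<mu>). \<bar>t\<bar> powr \<nu> * besselI \<nu> (\<bar>t\<bar> / \<sigma>) * (h (t + \<mu>) - svg_expect r \<sigma> \<mu> h))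
    - svg_I_sol \<sigma> \<mu> \<nu> x * (LBINT t=ereal (x - \<mu>)..\<infinity>. \<bar>t\<bar> powr \<nu> * besselK \<nu> (\<bar>t\<bar> / \<sigma>) * (h (t + \<mu>) - svg_expect r \<sigma> \<mu> h))"
  using assms by (simp add: svg_stein_sol_def svg_stein_formula_def Let_def svg_K_sol_eq svg_I_sol_eq \<nu>_def)

text \<open>By the Wronskian identity for \<open>I\<^sub>\<nu>\<close>, \<open>K\<^sub>\<nu>\<close> the right-hand side equals \<open>1 / (\<sigma>\<^sup>3 \<zeta>)\<close>; here only
  the term \<open>- w u' v\<close> is kept, using \<open>v' u \<ge> 0\<close>.\<close>

lemma svg_wronskian_lower_bound:
  fixes \<sigma> \<mu> \<zeta> \<nu> :: real
  defines "x0 \<equiv> \<mu> + \<sigma> * \<zeta>"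
  assumes \<nu>: "\<nu> > -1" and \<sigma>: "\<sigma> > 0" and \<zeta>: "\<zeta> > 0"
  shows "\<zeta> powr \<nu> * K_moment 0 (\<nu> + 1) \<zeta> / (\<sigma> ^ 3 * 2 powr \<nu> * Gamma (\<nu> + 1))
    \<le> \<sigma>\<^sup>2 * (x0 - \<mu>) powr (2 * \<nu>) * (deriv (svg_I_sol \<sigma> \<mu> \<nu>) x0 * svg_K_sol \<sigma> \<mu> \<nu> x0
        - deriv (svg_K_sol \<sigma> \<mu> \<nu>) x0 * svg_I_sol \<sigma> \<mu> \<nu> x0)"
proof -
  have y: "x0 - \<mu> = \<sigma> * \<zeta>" and z: "(x0 - \<mu>) / \<sigma> = \<zeta>" and x0: "x0 > \<mu>"
    using \<sigma> \<zeta> by (auto simp: x0_def)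
  define Y where "Y = (\<sigma> * \<zeta>) powr \<nu>"
  have Y: "Y = \<sigma> powr \<nu> * \<zeta> powr \<nu>" "Y > 0"
    using \<sigma> \<zeta> by (simp_all add: Y_def powr_mult)
  define K' where "K' = K_moment 0 (\<nu> + 1) \<zeta>"
  have K': "K' \<ge> 0"
    using \<zeta> by (simp add: K'_def K_moment_nonneg)
  define S where "S = besselI_series \<nu> 0 ((inverse (2 * \<sigma>) * (x0 - \<mu>))\<^sup>2)"
  have S: "inverse (Gamma (\<nu> + 1)) \<le> S"
    unfolding S_def using \<nu> by (intro inverse_Gamma_le_besselI_series) auto
  have "deriv (svg_K_sol \<sigma> \<mu> \<nu>) x0 = - K_moment 0 (\<nu> + 1) ((x0 - \<mu>) / \<sigma>) * (x0 - \<mu>) powr (- \<nu>) / \<sigma> ^ 3"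
    by (rule DERIV_imp_deriv[OF has_real_derivative_svg_K_sol[OF \<sigma> x0]])
  also have "\<dots> = - K' / (\<sigma> ^ 3 * Y)"
    unfolding z unfolding y K'_def Y_def by (simp add: powr_minus divide_inverse)
  finally have du: "deriv (svg_K_sol \<sigma> \<mu> \<nu>) x0 = - K' / (\<sigma> ^ 3 * Y)" .
  have "(2 * \<sigma>) powr \<nu> = 2 powr \<nu> * \<sigma> powr \<nu>"
    using \<sigma> by (simp add: powr_mult)
  then have v: "svg_I_sol \<sigma> \<mu> \<nu> x0 = S / (\<sigma>\<^sup>2 * (2 powr \<nu> * \<sigma> powr \<nu>))"
    unfolding svg_I_sol_def S_def[symmetric] by (simp add: divide_inverse)
  have w: "\<sigma>\<^sup>2 * (x0 - \<mu>) powr (2 * \<nu>) = \<sigma>\<^sup>2 * (Y * Y)"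
    by (simp add: y Y_def powr_add[symmetric])
  have "deriv (svg_I_sol \<sigma> \<mu> \<nu>) x0 * svg_K_sol \<sigma> \<mu> \<nu> x0 \<ge> 0"
    using deriv_svg_I_sol_nonneg[OF \<nu>, of \<mu> x0] x0 \<zeta> \<sigma>
    by (simp add: svg_K_sol_def K_moment_nonneg z)
  then have "\<sigma>\<^sup>2 * (Y * Y) * (- deriv (svg_K_sol \<sigma> \<mu> \<nu>) x0 * svg_I_sol \<sigma> \<mu> \<nu> x0)
      \<le> \<sigma>\<^sup>2 * (x0 - \<mu>) powr (2 * \<nu>) * (deriv (svg_I_sol \<sigma> \<mu> \<nu>) x0 * svg_K_sol \<sigma> \<mu> \<nu> x0
        - deriv (svg_K_sol \<sigma> \<mu> \<nu>) x0 * svg_I_sol \<sigma> \<mu> \<nu> x0)"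
    unfolding w by (intro mult_left_mono) auto
  moreover have "\<sigma>\<^sup>2 * (Y * Y) * (- deriv (svg_K_sol \<sigma> \<mu> \<nu>) x0 * svg_I_sol \<sigma> \<mu> \<nu> x0)
      = \<zeta> powr \<nu> * K' * S / (\<sigma> ^ 3 * 2 powr \<nu>)"
    unfolding du v using Y \<sigma> by (simp add: field_simps power2_eq_square power3_eq_cube)
  moreover have "\<zeta> powr \<nu> * K' / (\<sigma> ^ 3 * 2 powr \<nu> * Gamma (\<nu> + 1)) \<le> \<zeta> powr \<nu> * K' * S / (\<sigma> ^ 3 * 2 powr \<nu>)"
    using mult_left_mono[OF S, of "\<zeta> powr \<nu> * K' / (\<sigma> ^ 3 * 2 powr \<nu>)"] K' \<sigma>
    by (simp add: divide_inverse mult_ac)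
  ultimately show ?thesis
    by (simp add: K'_def)
qed

section \<open>A tent function with a large third derivative\<close>

lemma has_real_derivative_svg_I_integral:
  fixes \<nu> \<sigma> \<mu> C x :: real and G :: "real \<Rightarrow> real"
  assumes \<nu>: "\<nu> > -1/2" and \<sigma>: "\<sigma> > 0" and G: "continuous_on UNIV G" "\<And>t. \<bar>G t\<bar> \<le> C" and x: "x > \<mu>"
  shows "((\<lambda>x. LBINT t=0..ereal (x - \<mu>). \<bar>t\<bar> powr \<nu> * besselI \<nu> (\<bar>t\<bar> / \<sigma>) * G t)
    has_real_derivative \<sigma>\<^sup>2 * (x - \<mu>) powr (2 * \<nu>) * svg_I_sol \<sigma> \<mu> \<nu> x * G (x - \<mu>)) (at x)"
proof -
  have pow: "(x - \<mu>) powr (2 * \<nu>) = (x - \<mu>) powr \<nu> * (x - \<mu>) powr \<nu>"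
    by (simp add: powr_add[symmetric])
  have "((\<lambda>x. x - \<mu>) has_real_derivative 1) (at x)"
    by (auto intro!: derivative_eq_intros)
  from DERIV_chain2[OF has_real_derivative_besselI_integral[OF \<nu> \<sigma> G] this] x
  show ?thesis
    using \<nu> \<sigma> by (simp add: svg_I_sol_eq pow)
qed

lemma has_real_derivative_svg_K_integral:
  fixes \<nu> \<sigma> \<mu> C x :: real and G :: "real \<Rightarrow> real"
  assumes \<sigma>: "\<sigma> > 0" and G: "continuous_on UNIV G" "\<And>t. \<bar>G t\<bar> \<le> C" and x: "x > \<mu>"
  shows "((\<lambda>x. LBINT t=ereal (x - \<mu>)..\<infinity>. \<bar>t\<bar> powr \<nu> * besselK \<nu> (\<bar>t\<bar> / \<sigma>) * G t)
    has_real_derivative - \<sigma>\<^sup>2 * (x - \<mu>) powr (2 * \<nu>) * svg_K_sol \<sigma> \<mu> \<nu> x * G (x - \<mu>)) (at x)"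
proof -
  have pow: "(x - \<mu>) powr (2 * \<nu>) = (x - \<mu>) powr \<nu> * (x - \<mu>) powr \<nu>"
    by (simp add: powr_add[symmetric])
  have "((\<lambda>x. x - \<mu>) has_real_derivative 1) (at x)"
    by (auto intro!: derivative_eq_intros)
  from DERIV_chain2[OF has_real_derivative_besselK_integral[OF \<sigma> G, where \<nu> = \<nu>] this] x
  show ?thesis
    using \<sigma> by (simp add: svg_K_sol_eq pow)
qed

lemma svg_stein_sol_tent_bound:
  fixes r \<sigma> \<mu> \<zeta> N :: real
  defines "\<nu> \<equiv> (r - 1) / 2"
  assumes r: "r > 0" and \<sigma>: "\<sigma> > 0" and \<zeta>: "\<zeta> > 0"
    and bound: "\<And>x D. third_deriv_at (svg_stein_sol r \<sigma> \<mu> (\<lambda>x. max 0 (1 - \<bar>x - (\<mu> + \<sigma> * \<zeta>)\<bar>))) x D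
      \<Longrightarrow> \<bar>D\<bar> \<le> N"
  shows "\<zeta> powr \<nu> * K_moment 0 (\<nu> + 1) \<zeta> / (\<sigma> ^ 3 * 2 powr \<nu> * Gamma (\<nu> + 1)) \<le> N"
proof -
  have \<nu>: "\<nu> > -1/2"
    using r by (simp add: \<nu>_def)
  define x0 where "x0 = \<mu> + \<sigma> * \<zeta>"
  define h where "h x = max 0 (1 - \<bar>x - x0\<bar>)" for x
  define E where "E = svg_expect r \<sigma> \<mu> h"
  define G where "G t = h (t + \<mu>) - E" for t
  \<comment> \<open>on this ball the tent is affine on either side of \<open>x0\<close>, and the ball lies right of \<open>\<mu>\<close>\<close>
  define \<rho> where "\<rho> = min 1 (\<sigma> * \<zeta> / 2)"
  define w where "w x = \<sigma>\<^sup>2 * (x - \<mu>) powr (2 * \<nu>)" for x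
  have ball: "x > \<mu>" "\<bar>x - x0\<bar> < 1" if "x \<in> ball x0 \<rho>" for x
  proof -
    have "\<bar>x0 - x\<bar> < 1" "\<bar>x0 - x\<bar> < \<sigma> * \<zeta> / 2"
      using that by (auto simp: \<rho>_def dist_real_def)
    then show "x > \<mu>" "\<bar>x - x0\<bar> < 1"
      unfolding x0_def by arith+
  qed
  have G: "continuous_on UNIV G" "\<bar>G t\<bar> \<le> 1 + \<bar>E\<bar>" for t
    unfolding G_def h_def by (auto intro!: continuous_intros)
  have "\<bar>w x0 * (deriv (svg_I_sol \<sigma> \<mu> \<nu>) x0 * svg_K_sol \<sigma> \<mu> \<nu> x0
      - deriv (svg_K_sol \<sigma> \<mu> \<nu>) x0 * svg_I_sol \<sigma> \<mu> \<nu> x0)\<bar> \<le> N"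
  proof (rule variation_of_parameters_kink_bound)
    fix x assume x: "x \<in> ball x0 \<rho>"
    show "svg_stein_sol r \<sigma> \<mu> h x = - svg_K_sol \<sigma> \<mu> \<nu> x * (LBINT t=0..ereal (x - \<mu>). \<bar>t\<bar> powr \<nu> * besselI \<nu> (\<bar>t\<bar> / \<sigma>) * G t)
        - svg_I_sol \<sigma> \<mu> \<nu> x * (LBINT t=ereal (x - \<mu>)..\<infinity>. \<bar>t\<bar> powr \<nu> * besselK \<nu> (\<bar>t\<bar> / \<sigma>) * G t)"
      using svg_stein_sol_eq[OF r \<sigma> ball(1)[OF x], of h] by (simp add: G_def E_def \<nu>_def)
    show "w differentiable (at x)"
      using ball(1)[OF x] unfolding w_def real_differentiable_def by (auto intro!: derivative_eq_intros exI)
    show "h x - E = (1 - E) - \<bar>x - x0\<bar>"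
      using ball(2)[OF x] by (simp add: h_def)
    show "((\<lambda>x. LBINT t=0..ereal (x - \<mu>). \<bar>t\<bar> powr \<nu> * besselI \<nu> (\<bar>t\<bar> / \<sigma>) * G t)
        has_real_derivative w x * svg_I_sol \<sigma> \<mu> \<nu> x * (h x - E)) (at x)"
      using has_real_derivative_svg_I_integral[OF \<nu> \<sigma> G ball(1)[OF x]] by (simp add: w_def G_def)
    show "((\<lambda>x. LBINT t=ereal (x - \<mu>)..\<infinity>. \<bar>t\<bar> powr \<nu> * besselK \<nu> (\<bar>t\<bar> / \<sigma>) * G t)
        has_real_derivative - w x * svg_K_sol \<sigma> \<mu> \<nu> x * (h x - E)) (at x)"
      using has_real_derivative_svg_K_integral[OF \<sigma> G ball(1)[OF x]] by (simp add: w_def G_def)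
  next
    show "thrice_differentiable_on (svg_K_sol \<sigma> \<mu> \<nu>) (ball x0 \<rho>)"
      using ball(1) by (blast intro: thrice_differentiable_on_subset thrice_differentiable_on_svg_K_sol[OF \<sigma>])
    show "thrice_differentiable_on (svg_I_sol \<sigma> \<mu> \<nu>) (ball x0 \<rho>)"
      using \<nu> by (intro thrice_differentiable_on_svg_I_sol) auto
  qed (use \<sigma> \<zeta> bound in \<open>simp_all add: \<rho>_def h_def[abs_def] x0_def\<close>)
  moreover have "\<zeta> powr \<nu> * K_moment 0 (\<nu> + 1) \<zeta> / (\<sigma> ^ 3 * 2 powr \<nu> * Gamma (\<nu> + 1))
      \<le> w x0 * (deriv (svg_I_sol \<sigma> \<mu> \<nu>) x0 * svg_K_sol \<sigma> \<mu> \<nu> x0 - deriv (svg_K_sol \<sigma> \<mu> \<nu>) x0 * svg_I_sol \<sigma> \<mu> \<nu> x0)"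
    using svg_wronskian_lower_bound[of \<nu> \<sigma> \<zeta> \<mu>] \<nu> \<sigma> \<zeta> by (simp add: w_def x0_def)
  ultimately show ?thesis
    by linarith
qed

lemma lip_const_le: "L-lipschitz_on UNIV h \<Longrightarrow> lip_const h \<le> L"
  unfolding lip_const_def
  by (rule cInf_lower) (auto intro!: bdd_belowI[of _ 0] dest: lipschitz_on_nonneg)

lemma lipschitz_on_tent: "1-lipschitz_on UNIV (\<lambda>x::real. max 0 (1 - \<bar>x - a\<bar>))"
  by (rule lipschitz_onI) (auto simp: dist_real_def max_def abs_if)

theorem proposition3p6:
  fixes r \<sigma> \<mu> :: real
  assumes "r > 0" and "\<sigma> > 0"
  shows "\<not> (\<exists>M > 0. \<forall>h :: real \<Rightarrow> real. (\<exists>L. L-lipschitz_on UNIV h) \<longrightarrow>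
            (\<forall>x D. third_deriv_at (svg_stein_sol r \<sigma> \<mu> h) x D \<longrightarrow> \<bar>D\<bar> \<le> M * lip_const h))"
proof
  assume "\<exists>M > 0. \<forall>h :: real \<Rightarrow> real. (\<exists>L. L-lipschitz_on UNIV h) \<longrightarrow>
            (\<forall>x D. third_deriv_at (svg_stein_sol r \<sigma> \<mu> h) x D \<longrightarrow> \<bar>D\<bar> \<le> M * lip_const h)"
  then obtain M where M: "M > 0" and bound: "\<And>h x D. \<exists>L. L-lipschitz_on UNIV h \<Longrightarrow>
      third_deriv_at (svg_stein_sol r \<sigma> \<mu> h) x D \<Longrightarrow> \<bar>D\<bar> \<le> M * lip_const h"
    by blast
  define \<nu> where "\<nu> = (r - 1) / 2"
  define c where "c = \<sigma> ^ 3 * 2 powr \<nu> * Gamma (\<nu> + 1)"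
  have c: "c > 0"
    using assms by (auto simp: c_def \<nu>_def field_simps intro!: Gamma_real_pos)
  obtain \<zeta> where \<zeta>: "\<zeta> > 0" and large: "M * c < \<zeta> powr \<nu> * K_moment 0 (\<nu> + 1) \<zeta>"
    using K_moment_powr_unbounded_at_0[of \<nu>] \<open>r > 0\<close> by (auto simp: \<nu>_def)
  have "\<bar>D\<bar> \<le> M" if "third_deriv_at (svg_stein_sol r \<sigma> \<mu> (\<lambda>x. max 0 (1 - \<bar>x - (\<mu> + \<sigma> * \<zeta>)\<bar>))) x D" for x D
  proof -
    have "\<bar>D\<bar> \<le> M * lip_const (\<lambda>x. max 0 (1 - \<bar>x - (\<mu> + \<sigma> * \<zeta>)\<bar>))"
      using bound[OF _ that] lipschitz_on_tent by blast
    also have "\<dots> \<le> M"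
      using mult_left_le[OF lip_const_le[OF lipschitz_on_tent]] M by simp
    finally show ?thesis .
  qed
  then have "\<zeta> powr \<nu> * K_moment 0 (\<nu> + 1) \<zeta> / c \<le> M"
    unfolding \<nu>_def c_def by (rule svg_stein_sol_tent_bound[OF assms \<zeta>])
  with large c show False
    by (simp add: pos_divide_le_eq)
qed

end
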